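(* Let $\theta>1$, $p>1$, $\varepsilon>0$, let $F(u)=\frac{1}{2\theta}|1-u^2|^{\theta}$ and, for $\beta\in\mathbb{R}$, let $G_\beta(u):=F(u)-\beta u$. Set $u_\pm:=\pm(2\theta-1)^{-1/2}$, so that $F'(u_\pm)=\mp(2\theta-1)^{1/2-\theta}(2\theta-2)^{\theta-1}$. Consider the ODE on the whole real line $$\varepsilon^p\big(|u_x|^{p-2}u_x\big)_x-G_\beta'(u)=0,\qquad x\in\mathbb{R}.$$ (i) Let $\beta\in(0,F'(u_-))$ and set $z_\beta^-:=\min\{z\in\mathbb{R}: G_\beta'(z)=0\}$. If $2<p\le\theta$, then there exists a solution $\psi_\beta$ of the ODE with $\psi_\beta(0)=\max_{\mathbb{R}}\psi_\beta=:z_\beta^+$, with $G_\beta(z_\beta^+)=G_\beta(z_\beta^-)$, and there exists $\omega_\beta>0$ such that $\psi_\beta(x)=z_\beta^-$ for all $x\in(-\infty,-\omega_\beta]\cup[\omega_\beta,+\infty)$, $\psi_\beta'>0$ in $(-\omega_\beta,0)$ and $\psi_\beta'<0$ in $(0,\omega_\beta)$. Moreover $\lim_{\beta\to0^+}z_\beta^\pm=\pm1$. (ii) Let $\beta\in(F'(u_+),0)$ and set $z_\beta^+:=\max\{z\in\mathbb{R}: G_\beta'(z)=0\}$. If $2<p\le\theta$, then there exists a solution $\psi_\beta$ of the ODE with $\psi_\beta(0)=\min_{\mathbb{R}}\psi_\beta=:z_\beta^-$, with $G_\beta(z_\beta^-)=G_\beta(z_\beta^+)$, and there exists $\omega_\beta>0$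 such that $\psi_\beta(x)=z_\beta^+$ for all $x\in(-\infty,-\omega_\beta]\cup[\omega_\beta,+\infty)$, $\psi_\beta'<0$ in $(-\omega_\beta,0)$ and $\psi_\beta'>0$ in $(0,\omega_\beta)$.
   Context: For $\beta\in(F'(u_+),F'(u_-))$ the function $G_\beta$ has exactly three critical points. The solutions $\psi_\beta$ are called pulse (homoclinic) solutions. *)

theory Defs
  imports "HOL-Analysis.Analysis"
begin

definition Fpot :: "real \<Rightarrow> real \<Rightarrow> real" where
  "Fpot \<theta> u = (1 / (2 * \<theta>)) * \<bar>1 - u\<^sup>2\<bar> powr \<theta>"

definition Gpot :: "real \<Rightarrow> real \<Rightarrow> real \<Rightarrow> real" where
  "Gpot \<theta> \<beta> u = Fpot \<theta> u - \<beta> * u"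

definition u_plus :: "real \<Rightarrow> real" where
  "u_plus \<theta> = (2 * \<theta> - 1) powr (-1/2)"

definition u_minus :: "real \<Rightarrow> real" where
  "u_minus \<theta> = - ((2 * \<theta> - 1) powr (-1/2))"

definition is_solution :: "real \<Rightarrow> real \<Rightarrow> real \<Rightarrow> real \<Rightarrow> (real \<Rightarrow> real) \<Rightarrow> bool" where
  "is_solution \<theta> p \<epsilon> \<beta> \<psi> \<longleftrightarrow>
     (\<forall>x. \<psi> differentiable (at x)) \<and>
     (\<forall>x. \<exists>D. ((\<lambda>y. \<bar>deriv \<psi> y\<bar> powr (p - 2) * deriv \<psi> y) has_real_derivative D) (at x)
              \<and> \<epsilon> powr p * D - deriv (Gpot \<theta> \<beta>) (\<psi> x) = 0)"

end

theory Submission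
  imports Defs
begin

text \<open>
  Multiplying the equation by \<open>\<psi>'\<close> gives the first integral
  \<open>(p - 1) / p * \<epsilon>\<^sup>p * \<bar>\<psi>'\<bar>\<^sup>p = G\<^sub>\<beta>(\<psi>) - G\<^sub>\<beta>(z)\<close>. So a pulse resting at the bottom \<open>z\<close> of a
  well of \<open>G\<^sub>\<beta>\<close> and climbing to the turning point \<open>b > z\<close> with \<open>G\<^sub>\<beta>(b) = G\<^sub>\<beta>(z)\<close> is obtained by
  inverting the time map \<open>T(u) = \<integral>\<^sub>u\<^sup>b (c (G\<^sub>\<beta> - G\<^sub>\<beta>(z)))\<^sup>-\<^sup>1\<^sup>/\<^sup>p\<close>, \<open>c = p / ((p - 1) \<epsilon>\<^sup>p)\<close>, on
  \<open>[0, T(z)]\<close>, extending the inverse evenly and by \<open>z\<close> outside \<open>[-T(z), T(z)]\<close>. The support is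
  compact because \<open>z\<close> is a nondegenerate minimum, so the integrand behaves like \<open>\<bar>u - z\<bar>\<^sup>-\<^sup>2\<^sup>/\<^sup>p\<close>
  near \<open>z\<close>, which is integrable since \<open>p > 2\<close>.

  For \<open>0 < \<beta> < F'(u\<^sub>-)\<close> the critical points of \<open>G\<^sub>\<beta>\<close> are \<open>z\<^sub>1 < u\<^sub>- < z\<^sub>2 < 0 < 1 < z\<^sub>3\<close> and
  \<open>G\<^sub>\<beta>(z\<^sub>3) < G\<^sub>\<beta>(z\<^sub>1) < G\<^sub>\<beta>(z\<^sub>2)\<close>, so the turning point lies in \<open>(z\<^sub>2, z\<^sub>3)\<close>. As \<open>\<beta> \<rightarrow> 0\<close>,
  \<open>z\<^sub>1 \<rightarrow> -1\<close> and the energy \<open>G\<^sub>\<beta>(z\<^sub>1) \<rightarrow> F(-1) = 0\<close>, which pins the turning point near the other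
  zero \<open>1\<close> of \<open>F\<close>. Part (ii) follows from part (i) by the symmetry \<open>G\<^sub>\<beta>(-u) = G\<^sub>-\<^sub>\<beta>(u)\<close>.
\<close>

lemma integrable_on_powr_from_left:
  fixes a b r :: real
  assumes "r > -1" "a \<le> b"
  shows "(\<lambda>v. (v - a) powr r) integrable_on {a..b}"
proof -
  have "(\<lambda>v. v powr r) integrable_on cbox 0 (b - a)"
    using integrable_on_powr_from_0[OF assms(1)] assms(2) by simp
  from integrable_shift_cbox[OF this, of "- a"] show ?thesis by simp
qed

lemma integrable_on_powr_from_right:
  fixes a b r :: real
  assumes "r > -1" "a \<le> b"
  shows "(\<lambda>v. (b - v) powr r) integrable_on {a..b}"
proof -
  have "(\<lambda>v. (v - - b) powr r) integrable_on {-b..-a}"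
    by (rule integrable_on_powr_from_left) (use assms in auto)
  then show ?thesis
    using Henstock_Kurzweil_Integration.integrable_reflect_real[where f="\<lambda>v. (b - v) powr r" and a=a and b=b]
    by (simp add: add.commute)
qed

lemma continuous_on_sgn_mult:
  fixes q :: "real \<Rightarrow> real"
  assumes "continuous_on UNIV q" and "q 0 = 0"
  shows "continuous_on UNIV (\<lambda>x. sgn x * q x)"
proof -
  have "isCont (\<lambda>x. sgn x * q x) x" for x
  proof (cases "x = 0")
    case False
    have "isCont sgn x" using isCont_sgn[where f="\<lambda>x. x" and a=x] False by simp
    then show ?thesis
      using assms(1) False by (intro continuous_intros) (auto simp: continuous_on_eq_continuous_at)
  next
    case True
    have "(q \<longlongrightarrow> 0) (at 0)"
      using assms by (metis continuous_on_eq_continuous_at continuous_within open_UNIV UNIV_I)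
    then have "((\<lambda>x. \<bar>q x\<bar>) \<longlongrightarrow> 0) (at 0)" by (rule tendsto_rabs_zero)
    moreover have "eventually (\<lambda>x. norm (sgn x * q x) \<le> \<bar>q x\<bar>) (at 0)"
      by (intro always_eventually allI) (auto simp: abs_mult sgn_if)
    ultimately have "((\<lambda>x. sgn x * q x) \<longlongrightarrow> 0) (at 0)"
      by (rule Lim_null_comparison[rotated])
    then show ?thesis using True assms(2) by (simp add: isCont_def)
  qed
  then show ?thesis by (simp add: continuous_on_eq_continuous_at)
qed

lemma continuous_on_minus_sgn_mult_powr:
  fixes W :: "real \<Rightarrow> real"
  assumes "continuous_on UNIV W" "\<And>y. W y \<ge> 0" "W 0 = 0" "r > 0"
  shows "continuous_on UNIV (\<lambda>y. - sgn y * W y powr r)"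
proof -
  have "continuous_on UNIV (\<lambda>y. W y powr r)"
    using assms by (intro continuous_on_powr') auto
  then have "continuous_on UNIV (\<lambda>y. sgn y * W y powr r)"
    by (rule continuous_on_sgn_mult) (simp add: assms(3))
  from continuous_on_minus[OF this] show ?thesis by simp
qed

lemma DERIV_continuous_off_finite:
  fixes f g :: "real \<Rightarrow> real"
  assumes "continuous_on UNIV f" "continuous_on UNIV g" "finite S"
    and "\<And>x. x \<notin> S \<Longrightarrow> (f has_real_derivative g x) (at x)"
  shows "(f has_real_derivative g x) (at x)"
proof -
  define a where "a = x - 1"
  have f_eq: "f y = f a + integral {a..y} g" if "a < y" for y
  proof -
    have "(g has_integral (f y - f a)) {a..y}"
      using that assms continuous_on_subset[OF assms(1)]
      by (intro fundamental_theorem_of_calculus_interior_strong[OF assms(3)])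
         (auto simp: has_real_derivative_iff_has_vector_derivative[symmetric])
    then show ?thesis by (simp add: integral_unique)
  qed
  have "((\<lambda>y. integral {a..y} g) has_real_derivative g x) (at x within {a..x + 1})"
    using assms(2) continuous_on_subset by (intro integral_has_real_derivative) (auto simp: a_def)
  then have "((\<lambda>y. f a + integral {a..y} g) has_real_derivative g x) (at x)"
    using at_within_Icc_at[of a x "x + 1"] by (auto simp: a_def intro!: derivative_eq_intros)
  then show ?thesis
    by (rule has_field_derivative_transform_within_open[where S="{a<..}"]) (auto simp: a_def f_eq)
qed

lemma has_real_derivative_const_beyond:
  fixes f :: "real \<Rightarrow> real"
  assumes "\<And>y. \<omega> < \<bar>y\<bar> \<Longrightarrow> f y = c" "\<omega> < \<bar>x\<bar>"
  shows "(f has_real_derivative 0) (at x)"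
proof -
  have "open {y. \<omega> < \<bar>y\<bar>}" by (intro open_Collect_less continuous_intros)
  then show ?thesis
    by (rule has_field_derivative_transform_within_open[OF DERIV_const]) (use assms in auto)
qed

lemma linear_lower_bound_before_zero:
  fixes H h :: "real \<Rightarrow> real"
  assumes H_deriv: "\<And>u. (H has_real_derivative h u) (at u)"
    and "isCont h b" "H b = 0" "h b < 0"
  obtains k e where "k > 0" "e > 0" "\<And>u. b - e < u \<Longrightarrow> u \<le> b \<Longrightarrow> k * (b - u) \<le> H u"
proof -
  obtain e where "e > 0" and e: "\<And>u. \<bar>u - b\<bar> < e \<Longrightarrow> \<bar>h u - h b\<bar> < - h b / 2"
    using assms(2,4) unfolding continuous_at_eps_delta dist_real_def
    by (metis half_gt_zero neg_0_less_iff_less)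
  have "- h b / 2 * (b - u) \<le> H u" if "b - e < u" "u \<le> b" for u
  proof (cases "u = b")
    case False
    then have "u < b" using that by simp
    then obtain z where z: "u < z" "z < b" "H b - H u = (b - u) * h z"
      using MVT2[of u b H h] H_deriv by blast
    have "h z < h b / 2" using e[of z] z that by auto
    then have "(b - u) * h z \<le> (b - u) * (h b / 2)" using z by (intro mult_left_mono) auto
    moreover have "H u = - ((b - u) * h z)" using z assms(3) by (simp add: algebra_simps)
    moreover have "- h b / 2 * (b - u) = - ((b - u) * (h b / 2))" by (simp add: algebra_simps)
    ultimately show ?thesis by linarith
  qed (use assms(3) in simp)
  then show ?thesis using that[of "- h b / 2" e] \<open>e > 0\<close> assms(4) by simp
qed

lemma quadratic_lower_bound_after_zero:
  fixes H h :: "real \<Rightarrow> real"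
  assumes "\<And>u. (H has_real_derivative h u) (at u)" "H a = 0"
    and "\<And>s. a \<le> s \<Longrightarrow> s \<le> a + d \<Longrightarrow> k * (s - a) \<le> h s"
    and "a \<le> u" "u \<le> a + d"
  shows "k / 2 * (u - a)\<^sup>2 \<le> H u"
proof (cases "u = a")
  case False
  define D where "D = (\<lambda>t. H t - k / 2 * (t - a)\<^sup>2)"
  have "(D has_real_derivative h t - k * (t - a)) (at t)" for t
    unfolding D_def by (auto intro!: derivative_eq_intros assms(1))
  then obtain z where z: "a < z" "z < u" "D u - D a = (u - a) * (h z - k * (z - a))"
    using MVT2[of a u D] False assms(4) by force
  have "0 \<le> (u - a) * (h z - k * (z - a))"
    using assms(3)[of z] z assms(5) by simp
  then show ?thesis using z assms(2) by (simp add: D_def)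
qed (use assms(2) in simp)

lemma linear_lower_bound_of_positive_derivative:
  fixes f f' :: "real \<Rightarrow> real"
  assumes "a \<le> b" "continuous_on {a..b} f'" "\<And>t. t \<in> {a..b} \<Longrightarrow> f' t > 0"
    and "\<And>t. t \<in> {a..b} \<Longrightarrow> (f has_real_derivative f' t) (at t)"
  obtains k where "k > 0" "\<And>s. a \<le> s \<Longrightarrow> s \<le> b \<Longrightarrow> k * (s - a) \<le> f s - f a"
proof -
  obtain t0 where t0: "t0 \<in> {a..b}" "\<And>t. t \<in> {a..b} \<Longrightarrow> f' t0 \<le> f' t"
    using continuous_attains_inf[OF compact_Icc _ assms(2)] assms(1) by fastforce
  have "f' t0 * (s - a) \<le> f s - f a" if s: "a \<le> s" "s \<le> b" for s
  proof (cases "s = a")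
    case False
    then have "a < s" using s by simp
    then obtain z where z: "a < z" "z < s" "f s - f a = (s - a) * f' z"
      using MVT2[of a s f f'] assms(4) s by auto
    have "f' t0 * (s - a) \<le> f' z * (s - a)"
      using t0(2)[of z] z s by (intro mult_right_mono) auto
    then show ?thesis using z(3) by (simp add: mult.commute)
  qed simp
  moreover have "f' t0 > 0" using assms(3)[OF t0(1)] .
  ultimately show ?thesis using that by blast
qed

section \<open>Pulses generated by a potential well\<close>

lemma integrable_powr_neg_two_sided_bound:
  fixes a b p k k' m :: real
  assumes "a \<le> b" "p > 2" "k > 0" "k' > 0"
  shows "(\<lambda>u. (k * (u - a)\<^sup>2) powr (-1/p) + (k' * (b - u)) powr (-1/p) + m powr (-1/p)) integrable_on {a..b}"
proof (rule integrable_spike_finite[where S="{a, b}"])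
  show "(\<lambda>u. k powr (-1/p) * (u - a) powr (-2/p) + k' powr (-1/p) * (b - u) powr (-1/p)
      + m powr (-1/p)) integrable_on {a..b}"
    using assms(1,2)
    by (intro integrable_add integrable_on_cmult_left[where 'b=real, simplified]
          integrable_on_powr_from_left integrable_on_powr_from_right integrable_const_ivl)
       (auto simp: divide_simps)
  fix u assume "u \<in> {a..b} - {a, b}"
  then have "a < u" "u < b" by auto
  have "(k * (u - a)\<^sup>2) powr (-1/p) = k powr (-1/p) * ((u - a) powr 2) powr (-1/p)"
    using \<open>a < u\<close> \<open>k > 0\<close> by (simp add: powr_mult powr_numeral)
  also have "\<dots> = k powr (-1/p) * (u - a) powr (-2/p)"
    by (simp add: powr_powr)
  finally show "(k * (u - a)\<^sup>2) powr (-1/p) + (k' * (b - u)) powr (-1/p) + m powr (-1/p) =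
      k powr (-1/p) * (u - a) powr (-2/p) + k' powr (-1/p) * (b - u) powr (-1/p) + m powr (-1/p)"
    using \<open>u < b\<close> \<open>k' > 0\<close> by (simp add: powr_mult)
qed simp

lemma integrable_powr_neg_of_lower_bounds:
  fixes V :: "real \<Rightarrow> real" and a l r b p k k' m :: real
  assumes "a < l" "l \<le> r" "r < b" "p > 2" "k > 0" "k' > 0" "m > 0"
    and V_cont: "continuous_on {a<..<b} V"
    and V_left: "\<And>u. a < u \<Longrightarrow> u \<le> l \<Longrightarrow> k * (u - a)\<^sup>2 \<le> V u"
    and V_middle: "\<And>u. l \<le> u \<Longrightarrow> u \<le> r \<Longrightarrow> m \<le> V u"
    and V_right: "\<And>u. r \<le> u \<Longrightarrow> u < b \<Longrightarrow> k' * (b - u) \<le> V u"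
  shows "(\<lambda>u. V u powr (-1/p)) integrable_on {a..b}"
proof -
  define g where "g u = (k * (u - a)\<^sup>2) powr (-1/p) + (k' * (b - u)) powr (-1/p) + m powr (-1/p)" for u
  have "g integrable_on {a..b}"
    unfolding g_def using assms(1-6) by (intro integrable_powr_neg_two_sided_bound) auto
  moreover have V_pos: "V u > 0" if "u \<in> {a<..<b}" for u
  proof -
    have "0 < k * (u - a)\<^sup>2" "0 < k' * (b - u)" using that assms(5,6) by auto
    then show ?thesis
      using V_left[of u] V_middle[of u] V_right[of u] that \<open>m > 0\<close>
      by (cases "u \<le> l"; cases "r \<le> u") auto
  qed
  moreover have bound: "\<bar>V u powr (-1/p)\<bar> \<le> g u" if "u \<in> {a<..<b}" for u
  proof -
    have le_bound: "V u powr (-1/p) \<le> L powr (-1/p)" if "0 < L" "L \<le> V u" for L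
      using that \<open>p > 2\<close> by (intro powr_mono2') auto
    have "V u powr (-1/p) \<le> (k * (u - a)\<^sup>2) powr (-1/p) \<or> V u powr (-1/p) \<le> (k' * (b - u)) powr (-1/p)
        \<or> V u powr (-1/p) \<le> m powr (-1/p)"
      using le_bound V_left[of u] V_middle[of u] V_right[of u] that assms(5-7)
      by (cases "u \<le> l"; cases "r \<le> u") auto
    then show ?thesis
      using powr_ge_zero[of "V u" "-1/p"] powr_ge_zero[of "k * (u - a)\<^sup>2" "-1/p"]
        powr_ge_zero[of "k' * (b - u)" "-1/p"] powr_ge_zero[of m "-1/p"]
      unfolding g_def by (smt (verit))
  qed
  moreover have "continuous_on {a<..<b} (\<lambda>u. V u powr (-1/p))"
    using V_pos by (intro continuous_on_powr V_cont continuous_intros) (simp add: less_imp_neq[symmetric])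
  ultimately have "(\<lambda>u. V u powr (-1/p)) integrable_on {a<..<b}"
    by (intro measurable_bounded_by_integrable_imp_integrable_real[OF
          continuous_imp_measurable_on_sets_lebesgue _ bound])
       (auto simp: integrable_on_Icc_iff_Ioo)
  then show ?thesis by (simp add: integrable_on_Icc_iff_Ioo)
qed

lemma time_map_integrable:
  fixes V v :: "real \<Rightarrow> real" and a b p k d :: real
  assumes "a < b" "p > 2"
    and V_deriv: "\<And>u. (V has_real_derivative v u) (at u)" and "isCont v b"
    and "V b = 0" "v b < 0" and V_pos: "\<And>u. a < u \<Longrightarrow> u < b \<Longrightarrow> V u > 0"
    and "k > 0" "d > 0" and V_quadratic: "\<And>u. a \<le> u \<Longrightarrow> u \<le> a + d \<Longrightarrow> k * (u - a)\<^sup>2 \<le> V u"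
  shows "(\<lambda>u. V u powr (-1/p)) integrable_on {a..b}"
proof -
  obtain k' e where "k' > 0" "e > 0" and V_linear: "\<And>u. b - e < u \<Longrightarrow> u \<le> b \<Longrightarrow> k' * (b - u) \<le> V u"
    using linear_lower_bound_before_zero[OF V_deriv assms(4-6)] by blast
  define l where "l = a + min d ((b - a) / 3)"
  define r where "r = b - min (e / 2) ((b - a) / 3)"
  have "0 < min d ((b - a) / 3)" "0 < min (e / 2) ((b - a) / 3)"
    using assms(1) \<open>d > 0\<close> \<open>e > 0\<close> by auto
  moreover have "min d ((b - a) / 3) \<le> (b - a) / 3" "min (e / 2) ((b - a) / 3) \<le> (b - a) / 3"
    "min d ((b - a) / 3) \<le> d" "min (e / 2) ((b - a) / 3) \<le> e / 2"
    by (rule min.cobounded1 min.cobounded2)+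
  ultimately have lr: "a < l" "l < r" "r < b" "l \<le> a + d" "b - e < r"
    using \<open>e > 0\<close> unfolding l_def r_def by simp_all
  have V_cont: "continuous_on S V" for S
    by (rule continuous_at_imp_continuous_on) (use DERIV_isCont V_deriv in blast)
  obtain m where "m > 0" and V_middle: "\<And>u. l \<le> u \<Longrightarrow> u \<le> r \<Longrightarrow> m \<le> V u"
  proof -
    obtain u0 where u0: "u0 \<in> {l..r}" "\<And>u. u \<in> {l..r} \<Longrightarrow> V u0 \<le> V u"
      using continuous_attains_inf[OF compact_Icc _ V_cont, of l r] lr by auto
    have "V u0 > 0" using V_pos u0(1) lr by simp
    then show ?thesis using that u0(2) by simp
  qed
  show ?thesis
    using lr \<open>k > 0\<close> \<open>k' > 0\<close> \<open>m > 0\<close> assms(2) V_quadratic V_middle V_linear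
    by (intro integrable_powr_neg_of_lower_bounds[where l=l and r=r and k=k and k'=k' and m=m] V_cont)
       auto
qed

lemma has_real_derivative_integral_upper_tail:
  fixes f :: "real \<Rightarrow> real"
  assumes "f integrable_on {a..b}" "continuous_on {a<..<b} f" "a < u" "u < b"
  shows "((\<lambda>t. integral {t..b} f) has_real_derivative - f u) (at u)"
proof -
  define l m where "l = (a + u) / 2" and "m = (u + b) / 2"
  have lm: "a < l" "l < u" "u < m" "m < b" using assms(3,4) by (auto simp: l_def m_def)
  have split: "integral {t..b} f = integral {t..m} f + integral {m..b} f" if "l < t" "t < m" for t
    using integrable_subinterval_real[OF assms(1), of t b] that lm
    by (intro Henstock_Kurzweil_Integration.integral_combine[symmetric]) auto
  have "((\<lambda>t. integral {t..m} f) has_real_derivative - f u) (at u within {l..m})"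
    using lm by (intro integral_has_real_derivative' continuous_on_subset[OF assms(2)]) auto
  then have "((\<lambda>t. integral {t..m} f + integral {m..b} f) has_real_derivative - f u) (at u)"
    using at_within_Icc_at[of l u m] lm by (auto intro!: derivative_eq_intros)
  then show ?thesis
    by (rule has_field_derivative_transform_within_open[where S="{l<..<m}"]) (use lm split in auto)
qed

lemma continuous_inverse_of_strict_antimono:
  fixes T :: "real \<Rightarrow> real"
  assumes "a \<le> b" "continuous_on {a..b} T"
    and T_less: "\<And>u v. a \<le> u \<Longrightarrow> u < v \<Longrightarrow> v \<le> b \<Longrightarrow> T v < T u"
  obtains \<phi> where "continuous_on {T b..T a} \<phi>" "\<And>u. u \<in> {a..b} \<Longrightarrow> \<phi> (T u) = u"
    "\<And>x. x \<in> {T b..T a} \<Longrightarrow> \<phi> x \<in> {a..b} \<and> T (\<phi> x) = x"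
proof -
  have T_inj: "inj_on T {a..b}"
  proof (rule inj_onI)
    fix u v assume "u \<in> {a..b}" "v \<in> {a..b}" "T u = T v"
    then show "u = v" using T_less[of u v] T_less[of v u] by (cases u v rule: linorder_cases) auto
  qed
  have T_image: "T ` {a..b} = {T b..T a}"
  proof
    have "T v \<le> T u" if "a \<le> u" "u \<le> v" "v \<le> b" for u v
      using T_less[of u v] that by (cases "u = v") auto
    then show "T ` {a..b} \<subseteq> {T b..T a}" by auto
    show "{T b..T a} \<subseteq> T ` {a..b}"
    proof
      fix y assume "y \<in> {T b..T a}"
      then obtain u where "a \<le> u" "u \<le> b" "T u = y"
        using IVT2'[of T b y a] assms(1,2) by auto
      then show "y \<in> T ` {a..b}" by auto
    qed
  qed
  define \<phi> where "\<phi> = inv_into {a..b} T"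
  have "\<phi> (T u) = u" if "u \<in> {a..b}" for u
    using T_inj that by (simp add: \<phi>_def)
  moreover have "\<phi> x \<in> {a..b} \<and> T (\<phi> x) = x" if "x \<in> {T b..T a}" for x
    using that T_image f_inv_into_f[of x T "{a..b}"] inv_into_into[of x T "{a..b}"]
    by (auto simp: \<phi>_def)
  moreover have "continuous_on {T b..T a} \<phi>"
    using continuous_on_inv[OF assms(2) compact_Icc] calculation(1) T_image by auto
  ultimately show ?thesis using that by blast
qed

lemma inverse_of_tail_integral:
  fixes f :: "real \<Rightarrow> real"
  assumes "a < b" "f integrable_on {a..b}" "continuous_on {a<..<b} f"
    and f_pos: "\<And>u. a < u \<Longrightarrow> u < b \<Longrightarrow> f u > 0"
  obtains \<omega> \<phi> where "\<omega> > 0" "continuous_on {0..\<omega>} \<phi>" "\<phi> 0 = b" "\<phi> \<omega> = a"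
    "\<And>x. 0 < x \<Longrightarrow> x < \<omega> \<Longrightarrow> a < \<phi> x \<and> \<phi> x < b"
    "\<And>x. 0 < x \<Longrightarrow> x < \<omega> \<Longrightarrow> (\<phi> has_real_derivative - inverse (f (\<phi> x))) (at x)"
proof -
  define T where "T u = integral {u..b} f" for u
  have T_cont: "continuous_on {a..b} T"
    unfolding T_def by (rule indefinite_integral_continuous_1'[OF assms(2)])
  have T_deriv: "(T has_real_derivative - f u) (at u)" if "a < u" "u < b" for u
    unfolding T_def using assms(2,3) that by (rule has_real_derivative_integral_upper_tail)
  have T_less: "T v < T u" if uv: "a \<le> u" "u < v" "v \<le> b" for u v
  proof (rule DERIV_neg_imp_decreasing_open[OF \<open>u < v\<close>])
    fix x assume "u < x" "x < v"
    then show "\<exists>y. (T has_real_derivative y) (at x) \<and> y < 0"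
      using T_deriv[of x] f_pos[of x] uv by auto
  qed (rule continuous_on_subset[OF T_cont], use uv in auto)
  have "T b = 0" by (simp add: T_def)
  obtain \<phi> where \<phi>_cont: "continuous_on {0..T a} \<phi>" and \<phi>_T: "\<And>u. u \<in> {a..b} \<Longrightarrow> \<phi> (T u) = u"
    and T_\<phi>: "\<And>x. x \<in> {0..T a} \<Longrightarrow> \<phi> x \<in> {a..b} \<and> T (\<phi> x) = x"
    using continuous_inverse_of_strict_antimono[of a b T] assms(1) T_cont T_less \<open>T b = 0\<close> by auto
  have \<phi>_inside: "a < \<phi> x \<and> \<phi> x < b" if "0 < x" "x < T a" for x
    using T_\<phi>[of x] that \<open>T b = 0\<close> by (cases "\<phi> x = a \<or> \<phi> x = b") auto
  have "(\<phi> has_real_derivative inverse (- f (\<phi> x))) (at x)" if x: "0 < x" "x < T a" for x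
  proof (rule DERIV_inverse_function[where f=T and a=0 and b="T a"])
    show "(T has_real_derivative - f (\<phi> x)) (at (\<phi> x))" "- f (\<phi> x) \<noteq> 0"
      using T_deriv f_pos \<phi>_inside[OF x] by (blast, fastforce)
    show "isCont \<phi> x"
      using continuous_on_interior[OF \<phi>_cont, of x] x by auto
  qed (use x T_\<phi> in auto)
  moreover have "T a > 0" "\<phi> 0 = b" "\<phi> (T a) = a"
    using T_less[of a b] \<phi>_T[of a] \<phi>_T[of b] \<open>T b = 0\<close> assms(1) by auto
  ultimately show ?thesis
    using that[OF \<open>T a > 0\<close> \<phi>_cont] \<phi>_inside by simp
qed

lemma even_extension_has_real_derivative:
  fixes V \<phi> :: "real \<Rightarrow> real" and a b \<omega> p :: real
  assumes V_cont: "continuous_on UNIV V" and "V a = 0" "V b = 0"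
    and V_pos: "\<And>u. a < u \<Longrightarrow> u < b \<Longrightarrow> V u > 0" and "p > 0" "\<omega> > 0"
    and \<phi>_cont: "continuous_on {0..\<omega>} \<phi>" and "\<phi> 0 = b" "\<phi> \<omega> = a"
    and \<phi>_inside: "\<And>x. 0 < x \<Longrightarrow> x < \<omega> \<Longrightarrow> a < \<phi> x \<and> \<phi> x < b"
    and \<phi>_deriv: "\<And>x. 0 < x \<Longrightarrow> x < \<omega> \<Longrightarrow> (\<phi> has_real_derivative - (V (\<phi> x) powr (1/p))) (at x)"
  defines "\<psi> \<equiv> \<lambda>x. \<phi> (min \<bar>x\<bar> \<omega>)"
  shows "(\<psi> has_real_derivative - sgn x * V (\<psi> x) powr (1/p)) (at x)"
proof (rule DERIV_continuous_off_finite[where S="{-\<omega>, 0, \<omega>}"])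
  have \<psi>_cont: "continuous_on UNIV \<psi>"
    unfolding \<psi>_def using \<open>\<omega> > 0\<close>
    by (intro continuous_on_compose2[OF \<phi>_cont] continuous_intros) auto
  then show "continuous_on UNIV \<psi>" .
  have "V (\<psi> y) \<ge> 0" for y
  proof -
    have "\<psi> y = a \<or> \<psi> y = b \<or> a < \<psi> y \<and> \<psi> y < b"
      using \<phi>_inside[of "\<bar>y\<bar>"] \<open>\<phi> 0 = b\<close> \<open>\<phi> \<omega> = a\<close>
      by (cases "y = 0"; cases "\<bar>y\<bar> < \<omega>") (auto simp: \<psi>_def min_def)
    then show ?thesis using V_pos[of "\<psi> y"] assms(2,3) by auto
  qed
  then show "continuous_on UNIV (\<lambda>y. - sgn y * V (\<psi> y) powr (1/p))"
    using \<open>p > 0\<close> \<open>\<omega> > 0\<close> \<open>\<phi> 0 = b\<close> \<open>V b = 0\<close>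
    by (intro continuous_on_minus_sgn_mult_powr continuous_on_compose2[OF V_cont \<psi>_cont])
       (auto simp: \<psi>_def)
next
  fix x :: real assume "x \<notin> {-\<omega>, 0, \<omega>}"
  then consider "\<omega> < \<bar>x\<bar>" | "0 < x" "x < \<omega>" | "-\<omega> < x" "x < 0" by force
  then show "(\<psi> has_real_derivative - sgn x * V (\<psi> x) powr (1/p)) (at x)"
  proof cases
    case 1
    have "(\<psi> has_real_derivative 0) (at x)"
      by (rule has_real_derivative_const_beyond[OF _ 1]) (use \<open>\<phi> \<omega> = a\<close> in \<open>simp add: \<psi>_def\<close>)
    then show ?thesis using 1 \<open>\<phi> \<omega> = a\<close> \<open>V a = 0\<close> by (simp add: \<psi>_def)
  next
    case 2
    from \<phi>_deriv[OF 2] have "(\<psi> has_real_derivative - (V (\<phi> x) powr (1/p))) (at x)"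
      by (rule has_field_derivative_transform_within_open[where S="{0<..<\<omega>}"])
         (use 2 in \<open>auto simp: \<psi>_def\<close>)
    then show ?thesis using 2 by (simp add: \<psi>_def)
  next
    case 3
    have "((\<lambda>y. \<phi> (- y)) has_real_derivative V (\<phi> (- x)) powr (1/p)) (at x)"
      using DERIV_chain2[OF \<phi>_deriv[of "- x"] DERIV_minus[OF DERIV_ident]] 3 by simp
    then have "(\<psi> has_real_derivative V (\<phi> (- x)) powr (1/p)) (at x)"
      by (rule has_field_derivative_transform_within_open[where S="{-\<omega><..<0}"])
         (use 3 in \<open>auto simp: \<psi>_def\<close>)
    then show ?thesis using 3 by (simp add: \<psi>_def)
  qed
qed simp

lemma flux_has_real_derivative:
  fixes \<psi> W :: "real \<Rightarrow> real" and s p w :: real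
  assumes \<psi>_deriv: "(\<psi> has_real_derivative s * W (\<psi> x) powr (1/p)) (at x)"
    and W_deriv: "(W has_real_derivative w) (at (\<psi> x))" and "W (\<psi> x) > 0" "\<bar>s\<bar> = 1" "p \<noteq> 0"
  shows "((\<lambda>y. s * W (\<psi> y) powr ((p - 1) / p)) has_real_derivative (p - 1) / p * w) (at x)"
proof -
  define X where "X = W (\<psi> x)"
  have "X powr ((p - 1) / p - 1) * X powr (1/p) = 1"
    using \<open>W (\<psi> x) > 0\<close> \<open>p \<noteq> 0\<close> by (simp add: X_def flip: powr_add) (simp add: field_simps)
  moreover have "((\<lambda>y. W (\<psi> y) powr ((p - 1) / p)) has_real_derivative
      (p - 1) / p * X powr ((p - 1) / p - 1) * (w * (s * X powr (1/p)))) (at x)"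
    using DERIV_fun_powr[OF DERIV_chain2[OF W_deriv \<psi>_deriv], of "(p - 1) / p"] \<open>W (\<psi> x) > 0\<close>
    by (simp add: X_def)
  ultimately have "((\<lambda>y. W (\<psi> y) powr ((p - 1) / p)) has_real_derivative s * ((p - 1) / p * w)) (at x)"
    by (simp add: algebra_simps)
  from DERIV_cmult[OF this, of s] show ?thesis
    using \<open>\<bar>s\<bar> = 1\<close> by (simp add: abs_if mult.assoc split: if_splits)
qed

lemma even_pulse_flux_has_real_derivative:
  fixes V v \<psi> :: "real \<Rightarrow> real" and a \<omega> p :: real
  assumes V_deriv: "\<And>u. (V has_real_derivative v u) (at u)" and v_cont: "continuous_on UNIV v"
    and "V a = 0" "v a = 0" "p > 1"
    and \<psi>_deriv: "\<And>x. (\<psi> has_real_derivative - sgn x * V (\<psi> x) powr (1/p)) (at x)"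
    and \<psi>_outside: "\<And>x. \<omega> \<le> \<bar>x\<bar> \<Longrightarrow> \<psi> x = a"
    and V_\<psi>_pos: "\<And>x. 0 < \<bar>x\<bar> \<Longrightarrow> \<bar>x\<bar> < \<omega> \<Longrightarrow> V (\<psi> x) > 0"
    and V_\<psi>_nonneg: "\<And>x. V (\<psi> x) \<ge> 0" and "V (\<psi> 0) = 0"
  shows "((\<lambda>y. - sgn y * V (\<psi> y) powr ((p - 1) / p)) has_real_derivative (p - 1) / p * v (\<psi> x)) (at x)"
proof (rule DERIV_continuous_off_finite[where S="{-\<omega>, 0, \<omega>}"])
  have \<psi>_cont: "continuous_on UNIV \<psi>"
    using \<psi>_deriv by (intro continuous_at_imp_continuous_on) (blast intro: DERIV_isCont)
  have V_cont: "continuous_on UNIV V"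
    using V_deriv by (intro continuous_at_imp_continuous_on) (blast intro: DERIV_isCont)
  show "continuous_on UNIV (\<lambda>y. - sgn y * V (\<psi> y) powr ((p - 1) / p))"
    using V_\<psi>_nonneg \<open>V (\<psi> 0) = 0\<close> \<open>p > 1\<close>
    by (intro continuous_on_minus_sgn_mult_powr continuous_on_compose2[OF V_cont \<psi>_cont]) auto
  show "continuous_on UNIV (\<lambda>y. (p - 1) / p * v (\<psi> y))"
    by (intro continuous_intros continuous_on_compose2[OF v_cont \<psi>_cont]) auto
next
  fix x :: real assume "x \<notin> {-\<omega>, 0, \<omega>}"
  then consider "\<omega> < \<bar>x\<bar>" | "0 < x" "x < \<omega>" | "-\<omega> < x" "x < 0" by force
  then show "((\<lambda>y. - sgn y * V (\<psi> y) powr ((p - 1) / p)) has_real_derivative (p - 1) / p * v (\<psi> x)) (at x)"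
  proof cases
    case 1
    have "((\<lambda>y. - sgn y * V (\<psi> y) powr ((p - 1) / p)) has_real_derivative 0) (at x)"
      by (rule has_real_derivative_const_beyond[OF _ 1]) (use \<psi>_outside \<open>V a = 0\<close> in simp)
    then show ?thesis using 1 \<psi>_outside \<open>v a = 0\<close> by simp
  next
    case 2
    have "((\<lambda>y. - 1 * V (\<psi> y) powr ((p - 1) / p)) has_real_derivative (p - 1) / p * v (\<psi> x)) (at x)"
      using 2 \<open>p > 1\<close> \<psi>_deriv[of x] V_\<psi>_pos[of x]
      by (intro flux_has_real_derivative V_deriv) auto
    then show ?thesis
      by (rule has_field_derivative_transform_within_open[where S="{0<..<\<omega>}"]) (use 2 in auto)
  next
    case 3
    have "((\<lambda>y. 1 * V (\<psi> y) powr ((p - 1) / p)) has_real_derivative (p - 1) / p * v (\<psi> x)) (at x)"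
      using 3 \<open>p > 1\<close> \<psi>_deriv[of x] V_\<psi>_pos[of x]
      by (intro flux_has_real_derivative V_deriv) auto
    then show ?thesis
      by (rule has_field_derivative_transform_within_open[where S="{-\<omega><..<0}"]) (use 3 in auto)
  qed
qed simp

lemma decreasing_profile:
  fixes V v :: "real \<Rightarrow> real" and a b p k d :: real
  assumes "a < b" "p > 2"
    and V_deriv: "\<And>u. (V has_real_derivative v u) (at u)" and "isCont v b"
    and "V a = 0" "V b = 0" "v b < 0" and V_pos: "\<And>u. a < u \<Longrightarrow> u < b \<Longrightarrow> V u > 0"
    and "k > 0" "d > 0" and v_linear: "\<And>s. a \<le> s \<Longrightarrow> s \<le> a + d \<Longrightarrow> k * (s - a) \<le> v s"
  obtains \<omega> \<phi> where "\<omega> > 0" "continuous_on {0..\<omega>} \<phi>" "\<phi> 0 = b" "\<phi> \<omega> = a"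
    "\<And>x. 0 < x \<Longrightarrow> x < \<omega> \<Longrightarrow> a < \<phi> x \<and> \<phi> x < b"
    "\<And>x. 0 < x \<Longrightarrow> x < \<omega> \<Longrightarrow> (\<phi> has_real_derivative - (V (\<phi> x) powr (1/p))) (at x)"
proof -
  have V_cont: "continuous_on S V" for S
    by (rule continuous_at_imp_continuous_on) (use DERIV_isCont V_deriv in blast)
  have "k / 2 * (u - a)\<^sup>2 \<le> V u" if "a \<le> u" "u \<le> a + d" for u
    using quadratic_lower_bound_after_zero[OF V_deriv \<open>V a = 0\<close> v_linear that] .
  then have "(\<lambda>u. V u powr (-1/p)) integrable_on {a..b}"
    using \<open>k > 0\<close> \<open>d > 0\<close> by (intro time_map_integrable[OF assms(1-4) assms(6-8), where k="k / 2" and d=d]) auto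
  moreover have "continuous_on {a<..<b} (\<lambda>u. V u powr (-1/p))"
    using V_pos by (intro continuous_on_powr V_cont continuous_intros) (simp add: less_imp_neq[symmetric])
  moreover have "V u powr (-1/p) > 0" if "a < u" "u < b" for u
    using V_pos[OF that] by simp
  moreover have "inverse (V u powr (-1/p)) = V u powr (1/p)" for u
    by (simp add: powr_minus_divide powr_minus)
  ultimately show ?thesis
    using inverse_of_tail_integral[OF \<open>a < b\<close>, of "\<lambda>u. V u powr (-1/p)"] that by auto
qed

lemma compactly_supported_pulse:
  fixes V v :: "real \<Rightarrow> real" and a b p k d :: real
  assumes "a < b" "p > 2"
    and V_deriv: "\<And>u. (V has_real_derivative v u) (at u)" and v_cont: "continuous_on UNIV v"
    and "V a = 0" "v a = 0" "V b = 0" "v b < 0" and V_pos: "\<And>u. a < u \<Longrightarrow> u < b \<Longrightarrow> V u > 0"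
    and "k > 0" "d > 0" and "\<And>s. a \<le> s \<Longrightarrow> s \<le> a + d \<Longrightarrow> k * (s - a) \<le> v s"
  obtains \<psi> \<omega> where "\<psi> 0 = b" "\<omega> > 0" "\<And>x. \<omega> \<le> \<bar>x\<bar> \<Longrightarrow> \<psi> x = a"
    "\<And>x. 0 < \<bar>x\<bar> \<Longrightarrow> \<bar>x\<bar> < \<omega> \<Longrightarrow> a < \<psi> x \<and> \<psi> x < b"
    "\<And>x. (\<psi> has_real_derivative - sgn x * V (\<psi> x) powr (1/p)) (at x)"
    "\<And>x. ((\<lambda>y. - sgn y * V (\<psi> y) powr ((p - 1) / p)) has_real_derivative (p - 1) / p * v (\<psi> x)) (at x)"
proof -
  have V_cont: "continuous_on UNIV V"
    by (rule continuous_at_imp_continuous_on) (use DERIV_isCont V_deriv in blast)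
  have "isCont v b" using v_cont by (simp add: continuous_on_eq_continuous_at)
  obtain \<omega> \<phi> where "\<omega> > 0" and \<phi>_cont: "continuous_on {0..\<omega>} \<phi>" and "\<phi> 0 = b" "\<phi> \<omega> = a"
    and \<phi>_inside: "\<And>x. 0 < x \<Longrightarrow> x < \<omega> \<Longrightarrow> a < \<phi> x \<and> \<phi> x < b"
    and \<phi>_deriv: "\<And>x. 0 < x \<Longrightarrow> x < \<omega> \<Longrightarrow> (\<phi> has_real_derivative - (V (\<phi> x) powr (1/p))) (at x)"
    using decreasing_profile[OF assms(1,2) V_deriv \<open>isCont v b\<close> assms(5,7,8) V_pos assms(10-12)] by blast
  define \<psi> where "\<psi> x = \<phi> (min \<bar>x\<bar> \<omega>)" for x
  have \<psi>_outside: "\<psi> x = a" if "\<omega> \<le> \<bar>x\<bar>" for x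
    using that \<open>\<phi> \<omega> = a\<close> by (simp add: \<psi>_def min_def)
  have \<psi>_inside: "a < \<psi> x \<and> \<psi> x < b" if "0 < \<bar>x\<bar>" "\<bar>x\<bar> < \<omega>" for x
    using \<phi>_inside[OF that] that by (simp add: \<psi>_def)
  have "\<psi> 0 = b" using \<open>\<phi> 0 = b\<close> \<open>\<omega> > 0\<close> by (simp add: \<psi>_def)
  have \<psi>_deriv: "(\<psi> has_real_derivative - sgn x * V (\<psi> x) powr (1/p)) (at x)" for x
    unfolding \<psi>_def
    by (rule even_extension_has_real_derivative[OF V_cont \<open>V a = 0\<close> \<open>V b = 0\<close> V_pos _ \<open>\<omega> > 0\<close>
          \<phi>_cont \<open>\<phi> 0 = b\<close> \<open>\<phi> \<omega> = a\<close> \<phi>_inside \<phi>_deriv]) (use \<open>p > 2\<close> in auto)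
  have V_\<psi>_nonneg: "V (\<psi> x) \<ge> 0" for x
  proof -
    have "\<psi> x = a \<or> \<psi> x = b \<or> a < \<psi> x \<and> \<psi> x < b"
      using \<psi>_inside[of x] \<psi>_outside[of x] \<open>\<psi> 0 = b\<close> by (cases "x = 0"; cases "\<omega> \<le> \<bar>x\<bar>") auto
    then show ?thesis using V_pos[of "\<psi> x"] \<open>V a = 0\<close> \<open>V b = 0\<close> by auto
  qed
  have "((\<lambda>y. - sgn y * V (\<psi> y) powr ((p - 1) / p)) has_real_derivative (p - 1) / p * v (\<psi> x)) (at x)"
    for x
  proof (rule even_pulse_flux_has_real_derivative[OF V_deriv v_cont \<open>V a = 0\<close> \<open>v a = 0\<close> _ \<psi>_deriv
        \<psi>_outside _ V_\<psi>_nonneg])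
    show "V (\<psi> y) > 0" if "0 < \<bar>y\<bar>" "\<bar>y\<bar> < \<omega>" for y
      using V_pos \<psi>_inside[OF that] by blast
  qed (use \<open>p > 2\<close> \<open>\<psi> 0 = b\<close> \<open>V b = 0\<close> in auto)
  then show ?thesis
    using that[OF \<open>\<psi> 0 = b\<close> \<open>\<omega> > 0\<close> \<psi>_outside \<psi>_inside \<psi>_deriv] by blast
qed

lemma p_laplacian_flux_of_root:
  fixes X p y :: real
  assumes "X \<ge> 0" "p > 2"
  shows "\<bar>- sgn y * X powr (1/p)\<bar> powr (p - 2) * (- sgn y * X powr (1/p)) = - sgn y * X powr ((p - 1) / p)"
proof (cases "y = 0 \<or> X = 0")
  case False
  then have "X > 0" "\<bar>- sgn y * X powr (1/p)\<bar> = X powr (1/p)"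
    using assms(1) by (auto simp: abs_mult sgn_if)
  moreover have "(p - 2) / p + 1 / p = (p - 1) / p"
    using assms(2) by (simp add: field_simps)
  ultimately show ?thesis
    by (simp add: powr_powr mult.left_commute flip: powr_add)
qed auto

lemma is_solution_of_flux_derivative:
  fixes V g \<psi> :: "real \<Rightarrow> real" and \<theta> \<beta> p \<epsilon> :: real
  assumes G_deriv: "\<And>u. (Gpot \<theta> \<beta> has_real_derivative g u) (at u)" and "p > 2" "\<epsilon> > 0"
    and \<psi>_deriv: "\<And>x. (\<psi> has_real_derivative - sgn x * V (\<psi> x) powr (1/p)) (at x)"
    and flux_deriv: "\<And>x. ((\<lambda>y. - sgn y * V (\<psi> y) powr ((p - 1) / p)) has_real_derivative
      (p - 1) / p * (p / ((p - 1) * \<epsilon> powr p) * g (\<psi> x))) (at x)"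
    and V_\<psi>_nonneg: "\<And>x. V (\<psi> x) \<ge> 0"
  shows "is_solution \<theta> p \<epsilon> \<beta> \<psi>"
  unfolding is_solution_def
proof (intro conjI allI exI)
  show "\<psi> differentiable (at x)" for x
    using \<psi>_deriv real_differentiable_def by blast
  have deriv_\<psi>: "deriv \<psi> x = - sgn x * V (\<psi> x) powr (1/p)" for x
    using \<psi>_deriv by (rule DERIV_imp_deriv)
  have "(\<lambda>y. \<bar>deriv \<psi> y\<bar> powr (p - 2) * deriv \<psi> y) = (\<lambda>y. - sgn y * V (\<psi> y) powr ((p - 1) / p))"
    by (rule ext) (simp only: deriv_\<psi> p_laplacian_flux_of_root[OF V_\<psi>_nonneg \<open>p > 2\<close>])
  then show "((\<lambda>y. \<bar>deriv \<psi> y\<bar> powr (p - 2) * deriv \<psi> y) has_real_derivative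
      (p - 1) / p * (p / ((p - 1) * \<epsilon> powr p) * g (\<psi> x))) (at x)" for x
    using flux_deriv[of x] by simp
  show "\<epsilon> powr p * ((p - 1) / p * (p / ((p - 1) * \<epsilon> powr p) * g (\<psi> x)))
      - deriv (Gpot \<theta> \<beta>) (\<psi> x) = 0" for x
    using DERIV_imp_deriv[OF G_deriv] assms(2,3) by simp
qed

definition pulse_above :: "real \<Rightarrow> real \<Rightarrow> real \<Rightarrow> real \<Rightarrow> real \<Rightarrow> (real \<Rightarrow> real) \<Rightarrow> bool" where
  "pulse_above \<theta> p \<epsilon> \<beta> z \<psi> \<longleftrightarrow> is_solution \<theta> p \<epsilon> \<beta> \<psi> \<and> (\<forall>x. \<psi> x \<le> \<psi> 0) \<and>
     Gpot \<theta> \<beta> (\<psi> 0) = Gpot \<theta> \<beta> z \<and>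
     (\<exists>\<omega>>0. (\<forall>x. \<omega> \<le> \<bar>x\<bar> \<longrightarrow> \<psi> x = z) \<and>
        (\<forall>x\<in>{-\<omega><..<0}. deriv \<psi> x > 0) \<and> (\<forall>x\<in>{0<..<\<omega>}. deriv \<psi> x < 0))"

definition pulse_below :: "real \<Rightarrow> real \<Rightarrow> real \<Rightarrow> real \<Rightarrow> real \<Rightarrow> (real \<Rightarrow> real) \<Rightarrow> bool" where
  "pulse_below \<theta> p \<epsilon> \<beta> z \<psi> \<longleftrightarrow> is_solution \<theta> p \<epsilon> \<beta> \<psi> \<and> (\<forall>x. \<psi> 0 \<le> \<psi> x) \<and>
     Gpot \<theta> \<beta> (\<psi> 0) = Gpot \<theta> \<beta> z \<and>
     (\<exists>\<omega>>0. (\<forall>x. \<omega> \<le> \<bar>x\<bar> \<longrightarrow> \<psi> x = z) \<and>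
        (\<forall>x\<in>{-\<omega><..<0}. deriv \<psi> x < 0) \<and> (\<forall>x\<in>{0<..<\<omega>}. deriv \<psi> x > 0))"

lemma pulse_above_of_potential_well:
  fixes \<theta> \<beta> p \<epsilon> a b k d :: real and g :: "real \<Rightarrow> real"
  assumes G_deriv: "\<And>u. (Gpot \<theta> \<beta> has_real_derivative g u) (at u)" and g_cont: "continuous_on UNIV g"
    and "p > 2" "\<epsilon> > 0" "a < b" "g a = 0" "g b < 0" "Gpot \<theta> \<beta> b = Gpot \<theta> \<beta> a"
    and G_above: "\<And>u. a < u \<Longrightarrow> u < b \<Longrightarrow> Gpot \<theta> \<beta> a < Gpot \<theta> \<beta> u"
    and "k > 0" "d > 0" and g_linear: "\<And>s. a \<le> s \<Longrightarrow> s \<le> a + d \<Longrightarrow> k * (s - a) \<le> g s"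
  obtains \<psi> where "pulse_above \<theta> p \<epsilon> \<beta> a \<psi>" "\<psi> 0 = b"
proof -
  define c where "c = p / ((p - 1) * \<epsilon> powr p)"
  \<comment> \<open>the first integral reads \<open>\<bar>\<psi>'\<bar>\<^sup>p = c (G\<^sub>\<beta>(\<psi>) - G\<^sub>\<beta>(a))\<close>\<close>
  have "c > 0" using assms(3,4) by (simp add: c_def)
  define V where "V u = c * (Gpot \<theta> \<beta> u - Gpot \<theta> \<beta> a)" for u
  have V_deriv: "(V has_real_derivative c * g u) (at u)" for u
    unfolding V_def by (auto intro!: derivative_eq_intros G_deriv)
  have V_pos: "V u > 0" if "a < u" "u < b" for u
    using G_above[OF that] \<open>c > 0\<close> by (simp add: V_def)
  have v_linear: "c * k * (s - a) \<le> c * g s" if "a \<le> s" "s \<le> a + d" for s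
    using g_linear[OF that] \<open>c > 0\<close> by (simp add: mult.assoc)
  show ?thesis
  proof (rule compactly_supported_pulse[OF \<open>a < b\<close> \<open>p > 2\<close> V_deriv _ _ _ _ _ V_pos _ \<open>d > 0\<close> v_linear])
    fix \<psi> \<omega>
    assume "\<psi> 0 = b" "\<omega> > 0" and \<psi>_outside: "\<And>x. \<omega> \<le> \<bar>x\<bar> \<Longrightarrow> \<psi> x = a"
      and \<psi>_inside: "\<And>x. 0 < \<bar>x\<bar> \<Longrightarrow> \<bar>x\<bar> < \<omega> \<Longrightarrow> a < \<psi> x \<and> \<psi> x < b"
      and \<psi>_deriv: "\<And>x. (\<psi> has_real_derivative - sgn x * V (\<psi> x) powr (1/p)) (at x)"
      and flux_deriv: "\<And>x. ((\<lambda>y. - sgn y * V (\<psi> y) powr ((p - 1) / p)) has_real_derivative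
        (p - 1) / p * (c * g (\<psi> x))) (at x)"
    have \<psi>_range: "\<psi> x = a \<or> \<psi> x = b \<or> a < \<psi> x \<and> \<psi> x < b" for x
      using \<psi>_inside[of x] \<psi>_outside[of x] \<open>\<psi> 0 = b\<close> by (cases "x = 0"; cases "\<omega> \<le> \<bar>x\<bar>") auto
    have "V (\<psi> x) \<ge> 0" for x
      using \<psi>_range[of x] V_pos[of "\<psi> x"] \<open>Gpot \<theta> \<beta> b = Gpot \<theta> \<beta> a\<close> by (auto simp: V_def)
    then have sol: "is_solution \<theta> p \<epsilon> \<beta> \<psi>"
      by (rule is_solution_of_flux_derivative[OF G_deriv assms(3,4) \<psi>_deriv flux_deriv[unfolded c_def]])
    have deriv_\<psi>: "deriv \<psi> x = - sgn x * V (\<psi> x) powr (1/p)" for x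
      using \<psi>_deriv by (rule DERIV_imp_deriv)
    have "deriv \<psi> x > 0" if "-\<omega> < x" "x < 0" for x
      using V_pos[of "\<psi> x"] \<psi>_inside[of x] that by (simp add: deriv_\<psi>)
    moreover have "deriv \<psi> x < 0" if "0 < x" "x < \<omega>" for x
      using V_pos[of "\<psi> x"] \<psi>_inside[of x] that by (simp add: deriv_\<psi>)
    moreover have "\<psi> x \<le> b" for x
      using \<psi>_range[of x] \<open>a < b\<close> by auto
    ultimately have "pulse_above \<theta> p \<epsilon> \<beta> a \<psi>"
      using sol \<open>\<omega> > 0\<close> \<open>\<psi> 0 = b\<close> \<psi>_outside \<open>Gpot \<theta> \<beta> b = Gpot \<theta> \<beta> a\<close>
      unfolding pulse_above_def by (intro conjI exI[of _ \<omega>]) auto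
    then show thesis using that \<open>\<psi> 0 = b\<close> by blast
  qed (use g_cont \<open>g a = 0\<close> \<open>g b < 0\<close> \<open>c > 0\<close> \<open>k > 0\<close> \<open>Gpot \<theta> \<beta> b = Gpot \<theta> \<beta> a\<close> in
    \<open>auto simp: V_def mult_pos_neg intro: continuous_intros\<close>)
qed

section \<open>The potential and its critical points\<close>

definition signed_powr :: "real \<Rightarrow> real \<Rightarrow> real" where
  "signed_powr w r = sgn w * \<bar>w\<bar> powr r"

definition dFpot :: "real \<Rightarrow> real \<Rightarrow> real" where
  "dFpot \<theta> u = - u * signed_powr (1 - u\<^sup>2) (\<theta> - 1)"

definition ddFpot :: "real \<Rightarrow> real \<Rightarrow> real" where
  "ddFpot \<theta> u = (1 - u\<^sup>2) powr (\<theta> - 2) * ((2 * \<theta> - 1) * u\<^sup>2 - 1)"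

lemma continuous_on_signed_powr: "r > 0 \<Longrightarrow> continuous_on UNIV (\<lambda>w. signed_powr w r)"
  unfolding signed_powr_def
  by (intro continuous_on_sgn_mult continuous_on_powr' continuous_intros) auto

lemma has_real_derivative_abs_powr:
  assumes "\<theta> > 1"
  shows "((\<lambda>w. \<bar>w\<bar> powr \<theta>) has_real_derivative \<theta> * signed_powr w (\<theta> - 1)) (at w)"
proof (rule DERIV_continuous_off_finite[where S="{0}"])
  show "continuous_on UNIV (\<lambda>w. \<bar>w\<bar> powr \<theta>)"
    using assms by (intro continuous_on_powr' continuous_intros) auto
  show "continuous_on UNIV (\<lambda>w. \<theta> * signed_powr w (\<theta> - 1))"
    using assms by (intro continuous_intros continuous_on_signed_powr) auto
next
  fix w :: real assume "w \<notin> {0}"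
  then consider "w > 0" | "w < 0" by force
  then show "((\<lambda>w. \<bar>w\<bar> powr \<theta>) has_real_derivative \<theta> * signed_powr w (\<theta> - 1)) (at w)"
  proof cases
    case 1
    have "((\<lambda>w. w powr \<theta>) has_real_derivative \<theta> * w powr (\<theta> - 1)) (at w)"
      using has_real_derivative_powr[OF 1] by simp
    then have "((\<lambda>w. \<bar>w\<bar> powr \<theta>) has_real_derivative \<theta> * w powr (\<theta> - 1)) (at w)"
      by (rule has_field_derivative_transform_within_open[where S="{0<..}"]) (use 1 in auto)
    then show ?thesis using 1 by (simp add: signed_powr_def)
  next
    case 2
    have "((\<lambda>w. (- w) powr \<theta>) has_real_derivative \<theta> * (- w) powr (\<theta> - 1) * (-1)) (at w)"
      using DERIV_fun_powr[of uminus "-1" w \<theta>] 2 by (auto intro!: derivative_eq_intros)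
    then have "((\<lambda>w. \<bar>w\<bar> powr \<theta>) has_real_derivative \<theta> * (- w) powr (\<theta> - 1) * (-1)) (at w)"
      by (rule has_field_derivative_transform_within_open[where S="{..<0}"]) (use 2 in auto)
    then show ?thesis using 2 by (simp add: signed_powr_def)
  qed
qed simp

lemma Fpot_has_real_derivative:
  assumes "\<theta> > 1"
  shows "(Fpot \<theta> has_real_derivative dFpot \<theta> u) (at u)"
proof -
  have "((\<lambda>u. 1 / (2 * \<theta>) * \<bar>1 - u\<^sup>2\<bar> powr \<theta>) has_real_derivative
        1 / (2 * \<theta>) * (\<theta> * signed_powr (1 - u\<^sup>2) (\<theta> - 1) * (- (2 * u)))) (at u)"
    by (intro DERIV_cmult DERIV_chain2[OF has_real_derivative_abs_powr[OF assms]])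
       (auto intro!: derivative_eq_intros)
  then show ?thesis
    using assms by (simp add: Fpot_def[abs_def] dFpot_def field_simps)
qed

lemma Gpot_has_real_derivative:
  "\<theta> > 1 \<Longrightarrow> (Gpot \<theta> \<beta> has_real_derivative dFpot \<theta> u - \<beta>) (at u)"
  unfolding Gpot_def[abs_def] by (auto intro!: derivative_eq_intros Fpot_has_real_derivative)

lemma deriv_Fpot: "\<theta> > 1 \<Longrightarrow> deriv (Fpot \<theta>) u = dFpot \<theta> u"
  by (rule DERIV_imp_deriv[OF Fpot_has_real_derivative])

lemma deriv_Gpot: "\<theta> > 1 \<Longrightarrow> deriv (Gpot \<theta> \<beta>) u = dFpot \<theta> u - \<beta>"
  by (rule DERIV_imp_deriv[OF Gpot_has_real_derivative])

lemma continuous_on_dFpot: "\<theta> > 1 \<Longrightarrow> continuous_on S (dFpot \<theta>)"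
  unfolding dFpot_def[abs_def]
  by (intro continuous_intros continuous_on_compose2[OF continuous_on_signed_powr]) auto

lemma dFpot_minus: "dFpot \<theta> (- u) = - dFpot \<theta> u"
  by (simp add: dFpot_def)

lemma Gpot_minus: "Gpot \<theta> \<beta> (- u) = Gpot \<theta> (- \<beta>) u"
  by (simp add: Gpot_def Fpot_def)

lemma dFpot_inside:
  assumes "\<bar>u\<bar> < 1"
  shows "dFpot \<theta> u = - u * (1 - u\<^sup>2) powr (\<theta> - 1)"
proof -
  have "1 - u\<^sup>2 > 0" using assms by (simp add: abs_square_less_1)
  then show ?thesis by (simp add: dFpot_def signed_powr_def)
qed

lemma dFpot_outside:
  assumes "1 \<le> u"
  shows "dFpot \<theta> u = u * (u\<^sup>2 - 1) powr (\<theta> - 1)"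
proof -
  have "1 \<le> u\<^sup>2" using assms by (simp add: one_le_power)
  then show ?thesis by (cases "u\<^sup>2 = 1") (simp_all add: dFpot_def signed_powr_def)
qed

lemma dFpot_zeros: "dFpot \<theta> (-1) = 0" "dFpot \<theta> 0 = 0" "dFpot \<theta> 1 = 0"
  by (simp_all add: dFpot_def signed_powr_def)

lemma dFpot_has_real_derivative_inside:
  assumes "\<bar>u\<bar> < 1"
  shows "(dFpot \<theta> has_real_derivative ddFpot \<theta> u) (at u)"
proof -
  have pos: "1 - u\<^sup>2 > 0" using assms by (simp add: abs_square_less_1)
  have "((\<lambda>u. 1 - u\<^sup>2) has_real_derivative - (2 * u)) (at u)"
    by (auto intro!: derivative_eq_intros)
  from DERIV_mult[OF DERIV_minus[OF DERIV_ident] DERIV_fun_powr[OF this pos, of "\<theta> - 1"]]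
  have "((\<lambda>u. - u * (1 - u\<^sup>2) powr (\<theta> - 1)) has_real_derivative
      (-1) * (1 - u\<^sup>2) powr (\<theta> - 1) + ((\<theta> - 1) * (1 - u\<^sup>2) powr (\<theta> - 1 - 1) * (- (2 * u))) * (- u))
      (at u)"
    by simp
  moreover have "(1 - u\<^sup>2) powr (\<theta> - 1) = (1 - u\<^sup>2) powr (\<theta> - 2) * (1 - u\<^sup>2)"
    using pos powr_add[of "1 - u\<^sup>2" "\<theta> - 2" 1] by simp
  then have "(-1) * (1 - u\<^sup>2) powr (\<theta> - 1) + ((\<theta> - 1) * (1 - u\<^sup>2) powr (\<theta> - 1 - 1) * (- (2 * u))) * (- u)
      = ddFpot \<theta> u"
    by (simp add: ddFpot_def algebra_simps power2_eq_square)
  ultimately have "((\<lambda>u. - u * (1 - u\<^sup>2) powr (\<theta> - 1)) has_real_derivative ddFpot \<theta> u) (at u)"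
    by metis
  then show ?thesis
    by (rule has_field_derivative_transform_within_open[where S="{-1<..<1}"])
       (use assms dFpot_inside in auto)
qed

lemma u_minus_sq: "\<theta> > 1 \<Longrightarrow> (u_minus \<theta>)\<^sup>2 = 1 / (2 * \<theta> - 1)"
  by (simp add: u_minus_def power2_eq_square powr_minus_divide flip: powr_add)

lemma u_minus_bounds:
  assumes "\<theta> > 1"
  shows "-1 < u_minus \<theta>" "u_minus \<theta> < 0"
proof -
  show "u_minus \<theta> < 0" using assms by (simp add: u_minus_def)
  moreover have "(u_minus \<theta>)\<^sup>2 < 1" using assms by (simp add: u_minus_sq)
  ultimately show "-1 < u_minus \<theta>" by (simp add: abs_square_less_1)
qed

lemma u_plus_eq: "u_plus \<theta> = - u_minus \<theta>"
  by (simp add: u_plus_def u_minus_def)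

lemma ddFpot_pos:
  assumes "\<theta> > 1" "-1 < u" "u < u_minus \<theta>"
  shows "ddFpot \<theta> u > 0"
proof -
  have "-1 < u_minus \<theta>" "u_minus \<theta> < 0" using u_minus_bounds[OF assms(1)] .
  then have "(u - u_minus \<theta>) * (u + u_minus \<theta>) > 0" and "\<bar>u\<bar> < 1"
    using assms(2,3) by (auto intro: mult_neg_neg)
  then have "(u_minus \<theta>)\<^sup>2 < u\<^sup>2" and "\<bar>u\<bar> < 1"
    by (simp_all add: power2_eq_square algebra_simps)
  then have "1 < (2 * \<theta> - 1) * u\<^sup>2" "1 - u\<^sup>2 > 0"
    using assms(1) by (auto simp: u_minus_sq field_simps abs_square_less_1)
  then show ?thesis by (simp add: ddFpot_def)
qed

lemma ddFpot_neg:
  assumes "\<theta> > 1" "u_minus \<theta> < u" "u < 0"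
  shows "ddFpot \<theta> u < 0"
proof -
  have "-1 < u_minus \<theta>" "u_minus \<theta> < 0" using u_minus_bounds[OF assms(1)] .
  then have "(u - u_minus \<theta>) * (u + u_minus \<theta>) < 0" and "\<bar>u\<bar> < 1"
    using assms(2,3) by (auto intro: mult_pos_neg)
  then have "u\<^sup>2 < (u_minus \<theta>)\<^sup>2" and "\<bar>u\<bar> < 1"
    by (simp_all add: power2_eq_square algebra_simps)
  then have "(2 * \<theta> - 1) * u\<^sup>2 < 1" "1 - u\<^sup>2 > 0"
    using assms(1) by (auto simp: u_minus_sq field_simps abs_square_less_1)
  then show ?thesis by (simp add: ddFpot_def mult_pos_neg)
qed

lemma dFpot_strict_mono_left:
  assumes "\<theta> > 1" "-1 \<le> x" "x < y" "y \<le> u_minus \<theta>"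
  shows "dFpot \<theta> x < dFpot \<theta> y"
proof (rule DERIV_pos_imp_increasing_open[OF \<open>x < y\<close>])
  fix t assume "x < t" "t < y"
  then have "\<bar>t\<bar> < 1" "-1 < t" "t < u_minus \<theta>" using assms u_minus_bounds[OF assms(1)] by auto
  then show "\<exists>d. (dFpot \<theta> has_real_derivative d) (at t) \<and> d > 0"
    using dFpot_has_real_derivative_inside ddFpot_pos[OF assms(1)] by blast
qed (rule continuous_on_dFpot[OF assms(1)])

lemma dFpot_strict_antimono_middle:
  assumes "\<theta> > 1" "u_minus \<theta> \<le> x" "x < y" "y \<le> 0"
  shows "dFpot \<theta> y < dFpot \<theta> x"
proof (rule DERIV_neg_imp_decreasing_open[OF \<open>x < y\<close>])
  fix t assume "x < t" "t < y"
  then have "\<bar>t\<bar> < 1" "u_minus \<theta> < t" "t < 0" using assms u_minus_bounds[OF assms(1)] by auto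
  then show "\<exists>d. (dFpot \<theta> has_real_derivative d) (at t) \<and> d < 0"
    using dFpot_has_real_derivative_inside ddFpot_neg[OF assms(1)] by blast
qed (rule continuous_on_dFpot[OF assms(1)])

lemma dFpot_strict_mono_right:
  assumes "\<theta> > 1" "1 \<le> x" "x < y"
  shows "dFpot \<theta> x < dFpot \<theta> y"
proof -
  have "x\<^sup>2 \<le> y\<^sup>2" using assms(2,3) by (intro power_mono) auto
  moreover have "1 \<le> x\<^sup>2" using assms(2) by (rule one_le_power)
  ultimately have "(x\<^sup>2 - 1) powr (\<theta> - 1) \<le> (y\<^sup>2 - 1) powr (\<theta> - 1)"
    by (intro powr_mono2) (use assms(1) in linarith)+
  then have "x * (x\<^sup>2 - 1) powr (\<theta> - 1) \<le> x * (y\<^sup>2 - 1) powr (\<theta> - 1)"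
    using assms(2) by (intro mult_left_mono) auto
  also have "\<dots> < y * (y\<^sup>2 - 1) powr (\<theta> - 1)"
  proof -
    have "1 < y\<^sup>2" using assms(2,3) by (simp add: less_1_mult power2_eq_square)
    then show ?thesis using assms(3) by simp
  qed
  finally show ?thesis using assms(2,3) by (simp add: dFpot_outside)
qed

lemma dFpot_pos_cases:
  assumes "dFpot \<theta> u > 0"
  shows "-1 < u \<and> u < 0 \<or> 1 < u"
proof (rule ccontr)
  assume "\<not> ?thesis"
  then consider "u \<le> -1" | "0 \<le> u" "u \<le> 1" by force
  then show False
  proof cases
    case 1
    then have "1 \<le> u\<^sup>2" using one_le_power[of "- u" 2] by simp
    then have "signed_powr (1 - u\<^sup>2) (\<theta> - 1) \<le> 0" by (simp add: signed_powr_def sgn_if)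
    then show False
      using assms 1 mult_nonpos_nonpos[of u "signed_powr (1 - u\<^sup>2) (\<theta> - 1)"] by (simp add: dFpot_def)
  next
    case 2
    then have "u\<^sup>2 \<le> 1" by (simp add: power_le_one)
    then have "signed_powr (1 - u\<^sup>2) (\<theta> - 1) \<ge> 0" by (simp add: signed_powr_def sgn_if)
    then have "0 \<le> u * signed_powr (1 - u\<^sup>2) (\<theta> - 1)" using 2 by simp
    then show False using assms by (simp add: dFpot_def)
  qed
qed

lemma dFpot_gt_at_large:
  assumes "\<theta> > 1" "\<beta> > 0"
  shows "dFpot \<theta> (2 + \<beta>) > \<beta>"
proof -
  have "4 \<le> (2 + \<beta>)\<^sup>2" using assms(2) power_mono[of 2 "2 + \<beta>" 2] by simp
  then have "1 \<le> ((2 + \<beta>)\<^sup>2 - 1) powr (\<theta> - 1)" using assms(1) by (intro ge_one_powr_ge_zero) auto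
  then have "2 + \<beta> \<le> (2 + \<beta>) * ((2 + \<beta>)\<^sup>2 - 1) powr (\<theta> - 1)" using assms(2) by simp
  moreover have "dFpot \<theta> (2 + \<beta>) = (2 + \<beta>) * ((2 + \<beta>)\<^sup>2 - 1) powr (\<theta> - 1)"
    using assms(2) by (simp add: dFpot_outside)
  ultimately show ?thesis by linarith
qed

lemma dFpot_three_roots:
  assumes "\<theta> > 1" "0 < \<beta>" "\<beta> < dFpot \<theta> (u_minus \<theta>)"
  obtains z1 z2 z3 where "-1 < z1" "z1 < u_minus \<theta>" "u_minus \<theta> < z2" "z2 < 0" "1 < z3"
    "dFpot \<theta> z1 = \<beta>" "dFpot \<theta> z2 = \<beta>" "dFpot \<theta> z3 = \<beta>"
proof -
  note cont = continuous_on_dFpot[OF assms(1)]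
  have m: "-1 < u_minus \<theta>" "u_minus \<theta> < 0" using u_minus_bounds[OF assms(1)] .
  obtain z1 where "-1 \<le> z1" "z1 \<le> u_minus \<theta>" "dFpot \<theta> z1 = \<beta>"
    using IVT'[of "dFpot \<theta>" "-1" \<beta> "u_minus \<theta>"] cont dFpot_zeros assms(2,3) m by auto
  moreover obtain z2 where "u_minus \<theta> \<le> z2" "z2 \<le> 0" "dFpot \<theta> z2 = \<beta>"
    using IVT2'[of "dFpot \<theta>" 0 \<beta> "u_minus \<theta>"] cont dFpot_zeros assms(2,3) m by auto
  moreover obtain z3 where "1 \<le> z3" "z3 \<le> 2 + \<beta>" "dFpot \<theta> z3 = \<beta>"
    using IVT'[of "dFpot \<theta>" 1 \<beta> "2 + \<beta>"] cont dFpot_zeros assms(2) dFpot_gt_at_large[OF assms(1,2)]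
    by auto
  ultimately show ?thesis
    using that assms(2,3) dFpot_zeros by (metis order_le_less less_irrefl)
qed

lemma Gpot_critical_points:
  assumes "\<theta> > 1" "0 < \<beta>" "\<beta> < dFpot \<theta> (u_minus \<theta>)"
  obtains z1 z2 z3 where "-1 < z1" "z1 < u_minus \<theta>" "u_minus \<theta> < z2" "z2 < 0" "1 < z3"
    "{z. deriv (Gpot \<theta> \<beta>) z = 0} = {z1, z2, z3}"
    "\<And>s. z1 < s \<Longrightarrow> s < z2 \<Longrightarrow> dFpot \<theta> s > \<beta>"
    "\<And>s. z2 < s \<Longrightarrow> s < z3 \<Longrightarrow> dFpot \<theta> s < \<beta>"
proof -
  obtain z1 z2 z3 where z: "-1 < z1" "z1 < u_minus \<theta>" "u_minus \<theta> < z2" "z2 < 0" "1 < z3"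
    and roots: "dFpot \<theta> z1 = \<beta>" "dFpot \<theta> z2 = \<beta>" "dFpot \<theta> z3 = \<beta>"
    using dFpot_three_roots[OF assms] by blast
  note incr = dFpot_strict_mono_left[OF assms(1)]
  note decr = dFpot_strict_antimono_middle[OF assms(1)]
  note incr' = dFpot_strict_mono_right[OF assms(1)]
  have "{z. dFpot \<theta> z = \<beta>} = {z1, z2, z3}"
  proof (intro equalityI subsetI)
    fix z assume "z \<in> {z. dFpot \<theta> z = \<beta>}"
    then have root: "dFpot \<theta> z = \<beta>" by simp
    then consider "-1 < z" "z \<le> u_minus \<theta>" | "u_minus \<theta> \<le> z" "z < 0" | "1 < z"
      using dFpot_pos_cases[of \<theta> z] assms(2) by force
    then show "z \<in> {z1, z2, z3}"
    proof cases
      case 1 then show ?thesis using incr[of z z1] incr[of z1 z] root z roots by (cases z z1 rule: linorder_cases) auto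
    next
      case 2 then show ?thesis using decr[of z z2] decr[of z2 z] root z roots by (cases z z2 rule: linorder_cases) auto
    next
      case 3 then show ?thesis using incr'[of z z3] incr'[of z3 z] root z roots by (cases z z3 rule: linorder_cases) auto
    qed
  qed (use roots in auto)
  moreover have "dFpot \<theta> s > \<beta>" if "z1 < s" "s < z2" for s
    using incr[of z1 s] decr[of s z2] that z roots by (cases "s \<le> u_minus \<theta>") auto
  moreover have "dFpot \<theta> s < \<beta>" if "z2 < s" "s < z3" for s
  proof -
    consider "s \<le> 0" | "0 < s" "s < 1" | "1 \<le> s" by force
    then show ?thesis
    proof cases
      case 2 then show ?thesis using dFpot_pos_cases[of \<theta> s] assms(2) by force
    qed (use decr[of z2 s] incr'[of s z3] that z roots in auto)
  qed
  ultimately show ?thesis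
    using that z by (simp add: deriv_Gpot[OF assms(1)])
qed

lemma Gpot_turning_point:
  assumes "\<theta> > 1" "0 < \<beta>" "-1 < z1" "z1 < u_minus \<theta>" "z1 < z2" "z2 < z3" "1 < z3"
    and "dFpot \<theta> z3 = \<beta>"
    and above: "\<And>s. z1 < s \<Longrightarrow> s < z2 \<Longrightarrow> dFpot \<theta> s > \<beta>"
    and below: "\<And>s. z2 < s \<Longrightarrow> s < z3 \<Longrightarrow> dFpot \<theta> s < \<beta>"
  obtains zp where "z2 < zp" "zp < z3" "Gpot \<theta> \<beta> zp = Gpot \<theta> \<beta> z1"
    "\<And>u. z1 < u \<Longrightarrow> u < zp \<Longrightarrow> Gpot \<theta> \<beta> z1 < Gpot \<theta> \<beta> u"
proof -
  define G where "G = Gpot \<theta> \<beta>"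
  have G_deriv: "(G has_real_derivative dFpot \<theta> u - \<beta>) (at u)" for u
    unfolding G_def by (rule Gpot_has_real_derivative[OF assms(1)])
  have G_cont: "continuous_on S G" for S
    by (rule continuous_at_imp_continuous_on) (use DERIV_isCont G_deriv in blast)
  have G_incr: "G x < G y" if "z1 \<le> x" "x < y" "y \<le> z2" for x y
    using that G_deriv above
    by (intro DERIV_pos_imp_increasing_open[OF \<open>x < y\<close> _ G_cont]) (fastforce simp: algebra_simps)
  have G_decr: "G y < G x" if "z2 \<le> x" "x < y" "y \<le> z3" for x y
    using that G_deriv below
    by (intro DERIV_neg_imp_decreasing_open[OF \<open>x < y\<close> _ G_cont]) (fastforce simp: algebra_simps)
  have "G z3 < G z1"
  proof -
    obtain \<xi> where "1 < \<xi>" "\<xi> < z3" "Fpot \<theta> z3 - Fpot \<theta> 1 = (z3 - 1) * dFpot \<theta> \<xi>"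
      using MVT2[OF \<open>1 < z3\<close>, of "Fpot \<theta>" "dFpot \<theta>"] Fpot_has_real_derivative[OF assms(1)] by blast
    moreover have "dFpot \<theta> \<xi> < \<beta>"
      using dFpot_strict_mono_right[OF assms(1), of \<xi> z3] \<open>1 < \<xi>\<close> \<open>\<xi> < z3\<close> assms(8) by simp
    ultimately have "Fpot \<theta> z3 < (z3 - 1) * \<beta>"
      using \<open>1 < z3\<close> by (simp add: Fpot_def)
    moreover have "Fpot \<theta> z1 \<ge> 0" "\<beta> * z1 < 0"
      using assms(1-4) u_minus_bounds[OF assms(1)] by (auto simp: Fpot_def mult_pos_neg)
    ultimately show ?thesis using assms(2) by (simp add: G_def Gpot_def algebra_simps)
  qed
  moreover have "G z1 < G z2" using G_incr[of z1 z2] assms(5) by simp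
  ultimately obtain zp where "z2 \<le> zp" "zp \<le> z3" "G zp = G z1"
    using IVT2'[of G z3 "G z1" z2] G_cont assms(6) by force
  moreover have "z2 \<noteq> zp" "zp \<noteq> z3" using \<open>G z3 < G z1\<close> \<open>G z1 < G z2\<close> calculation(3) by auto
  moreover have "G z1 < G u" if "z1 < u" "u < zp" for u
    using G_incr[of z1 u] G_decr[of u zp] that calculation by (cases "u \<le> z2") auto
  ultimately show ?thesis using that unfolding G_def by (meson order_le_neq_trans)
qed

lemma dFpot_linear_growth:
  assumes "\<theta> > 1" "-1 < z" "z < u_minus \<theta>"
  obtains k d where "k > 0" "d > 0" "\<And>s. z \<le> s \<Longrightarrow> s \<le> z + d \<Longrightarrow> k * (s - z) \<le> dFpot \<theta> s - dFpot \<theta> z"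
proof -
  define d where "d = (u_minus \<theta> - z) / 2"
  have d: "d > 0" "z + d < u_minus \<theta>" using assms(3) by (simp_all add: d_def field_simps)
  have inside: "-1 < t" "t < u_minus \<theta>" "\<bar>t\<bar> < 1" if "t \<in> {z..z + d}" for t
    using that d assms(2) u_minus_bounds[OF assms(1)] by auto
  have "continuous_on {z..z + d} (\<lambda>t. (1 - t\<^sup>2) powr (\<theta> - 2))"
  proof (rule continuous_on_powr)
    show "\<forall>t\<in>{z..z + d}. 1 - t\<^sup>2 \<noteq> 0"
      using inside(3) by (simp add: abs_square_less_1 less_imp_neq[symmetric])
  qed (auto intro!: continuous_intros)
  then have "continuous_on {z..z + d} (ddFpot \<theta>)"
    unfolding ddFpot_def[abs_def] by (intro continuous_on_mult) (auto intro!: continuous_intros)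
  moreover have "ddFpot \<theta> t > 0" if "t \<in> {z..z + d}" for t
    using ddFpot_pos[OF assms(1)] inside[OF that] by blast
  moreover have "(dFpot \<theta> has_real_derivative ddFpot \<theta> t) (at t)" if "t \<in> {z..z + d}" for t
    using dFpot_has_real_derivative_inside inside(3)[OF that] by blast
  ultimately obtain k where "k > 0" "\<And>s. z \<le> s \<Longrightarrow> s \<le> z + d \<Longrightarrow> k * (s - z) \<le> dFpot \<theta> s - dFpot \<theta> z"
    using linear_lower_bound_of_positive_derivative[of z "z + d"] d(1) by (metis less_add_same_cancel1 less_imp_le)
  then show ?thesis using that d(1) by blast
qed

lemma Min_critical_points_Gpot:
  assumes "\<theta> > 1" "0 < \<beta>" "\<beta> < dFpot \<theta> (u_minus \<theta>)"
  shows "-1 < Min {z. deriv (Gpot \<theta> \<beta>) z = 0}" "Min {z. deriv (Gpot \<theta> \<beta>) z = 0} < u_minus \<theta>"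
    "dFpot \<theta> (Min {z. deriv (Gpot \<theta> \<beta>) z = 0}) = \<beta>"
proof -
  obtain z1 z2 z3 where z: "-1 < z1" "z1 < u_minus \<theta>" "u_minus \<theta> < z2" "z2 < 0" "1 < z3"
    and crit: "{z. deriv (Gpot \<theta> \<beta>) z = 0} = {z1, z2, z3}"
    by (rule Gpot_critical_points[OF assms])
  have "Min {z. deriv (Gpot \<theta> \<beta>) z = 0} = z1" using z by (simp add: crit min_def)
  moreover have "z1 \<in> {z. deriv (Gpot \<theta> \<beta>) z = 0}" using crit by simp
  then have "dFpot \<theta> z1 = \<beta>" by (simp add: deriv_Gpot[OF assms(1)])
  ultimately show "-1 < Min {z. deriv (Gpot \<theta> \<beta>) z = 0}" "Min {z. deriv (Gpot \<theta> \<beta>) z = 0} < u_minus \<theta>"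
    "dFpot \<theta> (Min {z. deriv (Gpot \<theta> \<beta>) z = 0}) = \<beta>"
    using z by simp_all
qed

lemma pulse_above_at_Min_critical_point:
  assumes "\<theta> > 1" "p > 2" "\<epsilon> > 0" "0 < \<beta>" "\<beta> < dFpot \<theta> (u_minus \<theta>)"
  obtains \<psi> where "pulse_above \<theta> p \<epsilon> \<beta> (Min {z. deriv (Gpot \<theta> \<beta>) z = 0}) \<psi>"
    "u_minus \<theta> < \<psi> 0" "dFpot \<theta> (\<psi> 0) < \<beta>"
proof -
  obtain z1 z2 z3 where z: "-1 < z1" "z1 < u_minus \<theta>" "u_minus \<theta> < z2" "z2 < 0" "1 < z3"
    and crit: "{z. deriv (Gpot \<theta> \<beta>) z = 0} = {z1, z2, z3}"
    and above: "\<And>s. z1 < s \<Longrightarrow> s < z2 \<Longrightarrow> dFpot \<theta> s > \<beta>"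
    and below: "\<And>s. z2 < s \<Longrightarrow> s < z3 \<Longrightarrow> dFpot \<theta> s < \<beta>"
    using Gpot_critical_points[OF assms(1,4,5)] by blast
  have "Min {z. deriv (Gpot \<theta> \<beta>) z = 0} = z1" using z by (simp add: crit min_def)
  have "z1 \<in> {z. deriv (Gpot \<theta> \<beta>) z = 0}" "z3 \<in> {z. deriv (Gpot \<theta> \<beta>) z = 0}" using crit by simp_all
  then have "dFpot \<theta> z1 = \<beta>" "dFpot \<theta> z3 = \<beta>" by (simp_all add: deriv_Gpot[OF assms(1)])
  have "z1 < z2" "z2 < z3" using z by simp_all
  obtain zp where zp: "z2 < zp" "zp < z3" "Gpot \<theta> \<beta> zp = Gpot \<theta> \<beta> z1"
    and G_above: "\<And>u. z1 < u \<Longrightarrow> u < zp \<Longrightarrow> Gpot \<theta> \<beta> z1 < Gpot \<theta> \<beta> u"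
    using Gpot_turning_point[OF assms(1,4) z(1,2) \<open>z1 < z2\<close> \<open>z2 < z3\<close> z(5) \<open>dFpot \<theta> z3 = \<beta>\<close> above below]
    by blast
  obtain k d where "k > 0" "d > 0"
    and growth: "\<And>s. z1 \<le> s \<Longrightarrow> s \<le> z1 + d \<Longrightarrow> k * (s - z1) \<le> dFpot \<theta> s - dFpot \<theta> z1"
    using dFpot_linear_growth[OF assms(1) z(1,2)] by blast
  have g_cont: "continuous_on UNIV (\<lambda>u. dFpot \<theta> u - \<beta>)"
    by (intro continuous_intros continuous_on_dFpot assms(1))
  have "z1 < zp" "dFpot \<theta> z1 - \<beta> = 0" "dFpot \<theta> zp - \<beta> < 0"
    using z zp below[of zp] \<open>dFpot \<theta> z1 = \<beta>\<close> by simp_all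
  show ?thesis
  proof (rule pulse_above_of_potential_well[OF Gpot_has_real_derivative[OF assms(1)] g_cont assms(2,3)
        \<open>z1 < zp\<close> \<open>dFpot \<theta> z1 - \<beta> = 0\<close> \<open>dFpot \<theta> zp - \<beta> < 0\<close> zp(3) G_above \<open>k > 0\<close> \<open>d > 0\<close>])
    show "k * (s - z1) \<le> dFpot \<theta> s - \<beta>" if "z1 \<le> s" "s \<le> z1 + d" for s
      using growth[OF that] \<open>dFpot \<theta> z1 = \<beta>\<close> by simp
    fix \<psi> assume "pulse_above \<theta> p \<epsilon> \<beta> z1 \<psi>" "\<psi> 0 = zp"
    then show thesis
      using that[of \<psi>] z zp \<open>dFpot \<theta> zp - \<beta> < 0\<close> \<open>Min {z. deriv (Gpot \<theta> \<beta>) z = 0} = z1\<close> by simp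
  qed
qed

section \<open>The limit \<open>\<beta> \<rightarrow> 0\<close>\<close>

lemma eventually_at_right_0_below:
  "b > 0 \<Longrightarrow> eventually (\<lambda>\<beta>::real. 0 < \<beta> \<and> \<beta> < b) (at_right 0)"
  unfolding eventually_at_right_field by blast

lemma Min_critical_points_Gpot_tendsto:
  assumes "\<theta> > 1"
  shows "((\<lambda>\<beta>. Min {z. deriv (Gpot \<theta> \<beta>) z = 0}) \<longlongrightarrow> -1) (at_right 0)"
  unfolding tendsto_iff
proof (intro allI impI)
  fix e :: real assume "e > 0"
  have um: "-1 < u_minus \<theta>" "u_minus \<theta> < 0" using u_minus_bounds[OF assms] .
  define w where "w = -1 + min e ((u_minus \<theta> + 1) / 2)"
  have w: "-1 < w" "w < u_minus \<theta>" "w \<le> -1 + e"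
    using \<open>e > 0\<close> um by (auto simp: w_def min_def field_simps)
  have "0 < dFpot \<theta> w" "dFpot \<theta> w < dFpot \<theta> (u_minus \<theta>)"
    using dFpot_strict_mono_left[OF assms, of "-1" w] dFpot_strict_mono_left[OF assms, of w "u_minus \<theta>"]
      w dFpot_zeros by simp_all
  show "\<forall>\<^sub>F \<beta> in at_right 0. dist (Min {z. deriv (Gpot \<theta> \<beta>) z = 0}) (-1) < e"
    using eventually_at_right_0_below[OF \<open>0 < dFpot \<theta> w\<close>]
  proof (rule eventually_mono)
    fix \<beta> assume \<beta>: "0 < \<beta> \<and> \<beta> < dFpot \<theta> w"
    define zm where "zm = Min {z. deriv (Gpot \<theta> \<beta>) z = 0}"
    have zm: "-1 < zm" "zm < u_minus \<theta>" "dFpot \<theta> zm = \<beta>"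
      using Min_critical_points_Gpot[OF assms, of \<beta>] \<beta> \<open>dFpot \<theta> w < dFpot \<theta> (u_minus \<theta>)\<close>
      by (simp_all add: zm_def)
    have "zm < w"
    proof (rule ccontr)
      assume "\<not> zm < w"
      then have "dFpot \<theta> w \<le> dFpot \<theta> zm"
        using dFpot_strict_mono_left[OF assms, of w zm] w zm by (cases "w = zm") auto
      then show False using zm \<beta> by simp
    qed
    then show "dist (Min {z. deriv (Gpot \<theta> \<beta>) z = 0}) (-1) < e"
      using zm w by (simp add: zm_def[symmetric] dist_real_def)
  qed
qed

lemma Fpot_lower_bound_inside:
  assumes "\<theta> > 1" "-1 < l" "l \<le> r" "r < 1"
  obtains \<mu> where "\<mu> > 0" "\<And>t. t \<in> {l..r} \<Longrightarrow> \<mu> \<le> Fpot \<theta> t"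
proof -
  have "continuous_on {l..r} (Fpot \<theta>)"
    by (rule continuous_at_imp_continuous_on) (use DERIV_isCont Fpot_has_real_derivative[OF assms(1)] in blast)
  then obtain t0 where t0: "t0 \<in> {l..r}" "\<And>t. t \<in> {l..r} \<Longrightarrow> Fpot \<theta> t0 \<le> Fpot \<theta> t"
    using continuous_attains_inf[OF compact_Icc, of l r "Fpot \<theta>"] assms(3) by auto
  then have "\<bar>t0\<bar> < 1" using assms(2,4) by auto
  then have "t0\<^sup>2 < 1" by (simp add: abs_square_less_1)
  then have "Fpot \<theta> t0 > 0" using assms(1) by (simp add: Fpot_def)
  then show ?thesis using that t0(2) by blast
qed

lemma pulse_height_near_1:
  assumes "\<theta> > 1" "0 < e" "e \<le> 1/2"
    and \<mu>: "\<And>t. t \<in> {u_minus \<theta>..1 - e} \<Longrightarrow> \<mu> \<le> Fpot \<theta> t"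
    and "0 < \<beta>" "\<beta> < \<mu> / 4" "\<beta> < dFpot \<theta> (1 + e)" "-1 < z" "Fpot \<theta> z < \<mu> / 2"
    and "u_minus \<theta> < y" "dFpot \<theta> y < \<beta>" "Gpot \<theta> \<beta> y = Gpot \<theta> \<beta> z"
  shows "\<bar>y - 1\<bar> < e"
proof -
  have Fpot_y: "Fpot \<theta> y = Fpot \<theta> z + \<beta> * (y - z)"
    using assms(12) by (simp add: Gpot_def algebra_simps)
  have "y < 1 + e"
  proof (rule ccontr)
    assume "\<not> y < 1 + e"
    then have "dFpot \<theta> (1 + e) \<le> dFpot \<theta> y"
      using dFpot_strict_mono_right[OF assms(1), of "1 + e" y] assms(2) by (cases "y = 1 + e") auto
    then show False using assms(7,11) by simp
  qed
  moreover have "1 - e < y"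
  proof (rule ccontr)
    assume "\<not> 1 - e < y"
    then have "\<mu> \<le> Fpot \<theta> y" using \<mu> assms(10) by simp
    moreover have "\<beta> * (y - z) \<le> \<beta> * 2"
      using \<open>\<not> 1 - e < y\<close> assms(2,5,8) by (intro mult_left_mono) auto
    ultimately show False using Fpot_y assms(6,9) by linarith
  qed
  ultimately show ?thesis by (simp add: abs_less_iff)
qed

lemma pulse_height_tendsto_1:
  fixes Y :: "real \<Rightarrow> real"
  assumes "\<theta> > 1"
    and Y: "\<And>\<beta>. 0 < \<beta> \<Longrightarrow> \<beta> < dFpot \<theta> (u_minus \<theta>) \<Longrightarrow>
       u_minus \<theta> < Y \<beta> \<and> dFpot \<theta> (Y \<beta>) < \<beta> \<and>
       Gpot \<theta> \<beta> (Y \<beta>) = Gpot \<theta> \<beta> (Min {z. deriv (Gpot \<theta> \<beta>) z = 0})"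
  shows "(Y \<longlongrightarrow> 1) (at_right 0)"
  unfolding tendsto_iff
proof (intro allI impI)
  fix e :: real assume "e > 0"
  define e' where "e' = min e (1/2)"
  have e': "0 < e'" "e' \<le> e" "e' \<le> 1/2" using \<open>e > 0\<close> by (auto simp: e'_def)
  have um: "-1 < u_minus \<theta>" "u_minus \<theta> < 0" using u_minus_bounds[OF assms(1)] .
  obtain \<mu> where "\<mu> > 0" and \<mu>: "\<And>t. t \<in> {u_minus \<theta>..1 - e'} \<Longrightarrow> \<mu> \<le> Fpot \<theta> t"
    using Fpot_lower_bound_inside[OF assms(1) um(1), of "1 - e'"] um e' by auto
  have "isCont (Fpot \<theta>) (-1)"
    using Fpot_has_real_derivative[OF assms(1)] by (rule DERIV_isCont)
  from isCont_tendsto_compose[OF this Min_critical_points_Gpot_tendsto[OF assms(1)]]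
  have "eventually (\<lambda>\<beta>. Fpot \<theta> (Min {z. deriv (Gpot \<theta> \<beta>) z = 0}) < \<mu> / 2) (at_right 0)"
    using \<open>\<mu> > 0\<close> by (intro order_tendstoD(2)) (auto simp: Fpot_def)
  moreover have "0 < dFpot \<theta> (u_minus \<theta>)" "0 < dFpot \<theta> (1 + e')"
    using dFpot_strict_mono_left[OF assms(1), of "-1" "u_minus \<theta>"]
      dFpot_strict_mono_right[OF assms(1), of 1 "1 + e'"] um e' dFpot_zeros by simp_all
  then have "0 < min (\<mu> / 4) (min (dFpot \<theta> (u_minus \<theta>)) (dFpot \<theta> (1 + e')))"
    using \<open>\<mu> > 0\<close> by simp
  note eventually_conj[OF calculation(1) eventually_at_right_0_below[OF this]]
  then show "\<forall>\<^sub>F \<beta> in at_right 0. dist (Y \<beta>) 1 < e"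
  proof (rule eventually_mono)
    fix \<beta> assume \<beta>: "Fpot \<theta> (Min {z. deriv (Gpot \<theta> \<beta>) z = 0}) < \<mu> / 2 \<and>
      0 < \<beta> \<and> \<beta> < min (\<mu> / 4) (min (dFpot \<theta> (u_minus \<theta>)) (dFpot \<theta> (1 + e')))"
    then have "\<bar>Y \<beta> - 1\<bar> < e'"
      using Y[of \<beta>] Min_critical_points_Gpot(1)[OF assms(1), of \<beta>]
      by (intro pulse_height_near_1[OF assms(1) e'(1,3) \<mu>, where z="Min {z. deriv (Gpot \<theta> \<beta>) z = 0}"])
         auto
    then show "dist (Y \<beta>) 1 < e" using e' by (simp add: dist_real_def)
  qed
qed

lemma pulse_above_family:
  assumes "\<theta> > 1" "p > 2" "\<epsilon> > 0"
  obtains \<Psi> where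
    "\<And>\<beta>. 0 < \<beta> \<Longrightarrow> \<beta> < dFpot \<theta> (u_minus \<theta>) \<Longrightarrow>
      pulse_above \<theta> p \<epsilon> \<beta> (Min {z. deriv (Gpot \<theta> \<beta>) z = 0}) (\<Psi> \<beta>)"
    "((\<lambda>\<beta>. \<Psi> \<beta> 0) \<longlongrightarrow> 1) (at_right 0)"
proof -
  define P where "P \<beta> \<psi> \<longleftrightarrow> pulse_above \<theta> p \<epsilon> \<beta> (Min {z. deriv (Gpot \<theta> \<beta>) z = 0}) \<psi> \<and>
      u_minus \<theta> < \<psi> 0 \<and> dFpot \<theta> (\<psi> 0) < \<beta>" for \<beta> \<psi>
  define \<Psi> where "\<Psi> \<beta> = (SOME \<psi>. P \<beta> \<psi>)" for \<beta>
  have \<Psi>: "P \<beta> (\<Psi> \<beta>)" if \<beta>: "0 < \<beta>" "\<beta> < dFpot \<theta> (u_minus \<theta>)" for \<beta>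
  proof -
    obtain \<psi> where "pulse_above \<theta> p \<epsilon> \<beta> (Min {z. deriv (Gpot \<theta> \<beta>) z = 0}) \<psi>"
      "u_minus \<theta> < \<psi> 0" "dFpot \<theta> (\<psi> 0) < \<beta>"
      by (rule pulse_above_at_Min_critical_point[OF assms \<beta>])
    then have "P \<beta> \<psi>" by (simp add: P_def)
    then show ?thesis unfolding \<Psi>_def by (rule someI[where P="P \<beta>"])
  qed
  show ?thesis
  proof (rule that)
    show "pulse_above \<theta> p \<epsilon> \<beta> (Min {z. deriv (Gpot \<theta> \<beta>) z = 0}) (\<Psi> \<beta>)"
      if "0 < \<beta>" "\<beta> < dFpot \<theta> (u_minus \<theta>)" for \<beta>
      using \<Psi>[OF that] by (simp add: P_def)
    show "((\<lambda>\<beta>. \<Psi> \<beta> 0) \<longlongrightarrow> 1) (at_right 0)"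
      using \<Psi> by (intro pulse_height_tendsto_1[OF assms(1)]) (simp add: P_def pulse_above_def)
  qed
qed

section \<open>Reflection and the main theorem\<close>

lemma is_solution_uminus:
  assumes "\<theta> > 1" "is_solution \<theta> p \<epsilon> (- \<beta>) \<phi>"
  shows "is_solution \<theta> p \<epsilon> \<beta> (\<lambda>x. - \<phi> x)" and "deriv (\<lambda>x. - \<phi> x) x = - deriv \<phi> x"
proof -
  have "(\<phi> has_real_derivative deriv \<phi> x) (at x)" for x
    using assms(2) DERIV_deriv_iff_real_differentiable unfolding is_solution_def by blast
  then have minus_deriv: "((\<lambda>x. - \<phi> x) has_real_derivative - deriv \<phi> x) (at x)" for x
    by (rule DERIV_minus)
  then show deriv_minus: "deriv (\<lambda>x. - \<phi> x) x = - deriv \<phi> x" for x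
    by (rule DERIV_imp_deriv)
  have flux: "(\<lambda>y. \<bar>deriv (\<lambda>x. - \<phi> x) y\<bar> powr (p - 2) * deriv (\<lambda>x. - \<phi> x) y)
      = (\<lambda>y. - (\<bar>deriv \<phi> y\<bar> powr (p - 2) * deriv \<phi> y))"
    by (simp add: deriv_minus)
  show "is_solution \<theta> p \<epsilon> \<beta> (\<lambda>x. - \<phi> x)"
    unfolding is_solution_def flux
  proof (intro conjI allI)
    fix x
    show "(\<lambda>x. - \<phi> x) differentiable (at x)" using minus_deriv real_differentiable_def by blast
    obtain D where "((\<lambda>y. \<bar>deriv \<phi> y\<bar> powr (p - 2) * deriv \<phi> y) has_real_derivative D) (at x)"
      "\<epsilon> powr p * D - deriv (Gpot \<theta> (- \<beta>)) (\<phi> x) = 0"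
      using assms(2) unfolding is_solution_def by blast
    then show "\<exists>D. ((\<lambda>y. - (\<bar>deriv \<phi> y\<bar> powr (p - 2) * deriv \<phi> y)) has_real_derivative D) (at x) \<and>
        \<epsilon> powr p * D - deriv (Gpot \<theta> \<beta>) (- \<phi> x) = 0"
      by (intro exI[of _ "- D"]) (auto intro: DERIV_minus simp: deriv_Gpot[OF assms(1)] dFpot_minus)
  qed
qed

lemma pulse_below_uminus:
  assumes "\<theta> > 1" "pulse_above \<theta> p \<epsilon> (- \<beta>) z \<phi>"
  shows "pulse_below \<theta> p \<epsilon> \<beta> (- z) (\<lambda>x. - \<phi> x)"
proof -
  have sol: "is_solution \<theta> p \<epsilon> (- \<beta>) \<phi>" using assms(2) by (simp add: pulse_above_def)
  show ?thesis
    using assms(2) is_solution_uminus[OF assms(1) sol]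
    unfolding pulse_above_def pulse_below_def by (simp add: Gpot_minus)
qed

lemma pulse_below_at_Max_critical_point:
  assumes "\<theta> > 1" "p > 2" "\<epsilon> > 0" "dFpot \<theta> (u_plus \<theta>) < \<beta>" "\<beta> < 0"
  obtains \<psi> where "pulse_below \<theta> p \<epsilon> \<beta> (Max {z. deriv (Gpot \<theta> \<beta>) z = 0}) \<psi>"
proof -
  have \<beta>: "0 < - \<beta>" "- \<beta> < dFpot \<theta> (u_minus \<theta>)"
    using assms(4,5) by (simp_all add: u_plus_eq dFpot_minus)
  obtain z1 z2 z3 where z: "-1 < z1" "z1 < u_minus \<theta>" "u_minus \<theta> < z2" "z2 < 0" "1 < z3"
    and crit: "{z. deriv (Gpot \<theta> (- \<beta>)) z = 0} = {z1, z2, z3}"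
    and "\<And>s. z1 < s \<Longrightarrow> s < z2 \<Longrightarrow> dFpot \<theta> s > - \<beta>"
    and "\<And>s. z2 < s \<Longrightarrow> s < z3 \<Longrightarrow> dFpot \<theta> s < - \<beta>"
    using Gpot_critical_points[OF assms(1) \<beta>] by blast
  have crit_iff: "deriv (Gpot \<theta> \<beta>) z = 0 \<longleftrightarrow> - z \<in> {z1, z2, z3}" for z
    unfolding crit[symmetric] by (simp add: deriv_Gpot[OF assms(1)] dFpot_minus eq_commute[of \<beta>])
  have "{z. deriv (Gpot \<theta> \<beta>) z = 0} = {- z1, - z2, - z3}"
  proof (intro equalityI subsetI)
    fix z assume "z \<in> {z. deriv (Gpot \<theta> \<beta>) z = 0}"
    then have "- z \<in> {z1, z2, z3}" using crit_iff by simp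
    then consider "- z = z1" | "- z = z2" | "- z = z3" by blast
    then show "z \<in> {- z1, - z2, - z3}" by cases (simp_all add: minus_equation_iff)
  next
    fix z assume "z \<in> {- z1, - z2, - z3}"
    then have "- z \<in> {z1, z2, z3}" by auto
    then show "z \<in> {z. deriv (Gpot \<theta> \<beta>) z = 0}" using crit_iff by simp
  qed
  then have "Max {z. deriv (Gpot \<theta> \<beta>) z = 0} = - Min {z. deriv (Gpot \<theta> (- \<beta>)) z = 0}"
    using z by (simp add: crit max_def min_def)
  then show ?thesis
    using pulse_above_at_Min_critical_point[OF assms(1-3) \<beta>] pulse_below_uminus[OF assms(1)] that by metis
qed

theorem proposition2p2:
  fixes \<theta> p \<epsilon> :: real
  assumes "\<theta> > 1" and "p > 1" and "\<epsilon> > 0"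
    and "2 < p" and "p \<le> \<theta>"
  shows
   "(\<exists>\<Psi> :: real \<Rightarrow> real \<Rightarrow> real.
      (\<forall>\<beta>. 0 < \<beta> \<and> \<beta> < deriv (Fpot \<theta>) (u_minus \<theta>) \<longrightarrow>
         (let zm = Min {z. deriv (Gpot \<theta> \<beta>) z = 0} in
            is_solution \<theta> p \<epsilon> \<beta> (\<Psi> \<beta>) \<and>
            (\<forall>x. \<Psi> \<beta> x \<le> \<Psi> \<beta> 0) \<and>
            Gpot \<theta> \<beta> (\<Psi> \<beta> 0) = Gpot \<theta> \<beta> zm \<and>
            (\<exists>\<omega>>0. (\<forall>x. \<omega> \<le> \<bar>x\<bar> \<longrightarrow> \<Psi> \<beta> x = zm) \<and>
                    (\<forall>x\<in>{-\<omega><..<0}. deriv (\<Psi> \<beta>) x > 0) \<and>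
                    (\<forall>x\<in>{0<..<\<omega>}. deriv (\<Psi> \<beta>) x < 0)))) \<and>
      ((\<lambda>\<beta>. \<Psi> \<beta> 0) \<longlongrightarrow> 1) (at_right 0) \<and>
      ((\<lambda>\<beta>. Min {z. deriv (Gpot \<theta> \<beta>) z = 0}) \<longlongrightarrow> -1) (at_right 0))
    \<and>
    (\<forall>\<beta>. deriv (Fpot \<theta>) (u_plus \<theta>) < \<beta> \<and> \<beta> < 0 \<longrightarrow>
       (let zp = Max {z. deriv (Gpot \<theta> \<beta>) z = 0} in
         \<exists>\<psi>. is_solution \<theta> p \<epsilon> \<beta> \<psi> \<and>
            (\<forall>x. \<psi> 0 \<le> \<psi> x) \<and>
            Gpot \<theta> \<beta> (\<psi> 0) = Gpot \<theta> \<beta> zp \<and>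
            (\<exists>\<omega>>0. (\<forall>x. \<omega> \<le> \<bar>x\<bar> \<longrightarrow> \<psi> x = zp) \<and>
                    (\<forall>x\<in>{-\<omega><..<0}. deriv \<psi> x < 0) \<and>
                    (\<forall>x\<in>{0<..<\<omega>}. deriv \<psi> x > 0))))"
proof -
  have \<theta>: "\<theta> > 1" and p: "p > 2" and \<epsilon>: "\<epsilon> > 0" using assms by simp_all
  obtain \<Psi> where \<Psi>: "\<And>\<beta>. 0 < \<beta> \<Longrightarrow> \<beta> < dFpot \<theta> (u_minus \<theta>) \<Longrightarrow>
      pulse_above \<theta> p \<epsilon> \<beta> (Min {z. deriv (Gpot \<theta> \<beta>) z = 0}) (\<Psi> \<beta>)"
    and "((\<lambda>\<beta>. \<Psi> \<beta> 0) \<longlongrightarrow> 1) (at_right 0)"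
    by (rule pulse_above_family[OF \<theta> p \<epsilon>]) blast
  moreover have "\<exists>\<psi>. pulse_below \<theta> p \<epsilon> \<beta> (Max {z. deriv (Gpot \<theta> \<beta>) z = 0}) \<psi>"
    if "dFpot \<theta> (u_plus \<theta>) < \<beta>" "\<beta> < 0" for \<beta>
    by (rule pulse_below_at_Max_critical_point[OF \<theta> p \<epsilon> that]) blast
  ultimately show ?thesis
    using Min_critical_points_Gpot_tendsto[OF \<theta>]
    unfolding deriv_Fpot[OF \<theta>] Let_def pulse_above_def[symmetric] pulse_below_def[symmetric]
    by blast
qed

end
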